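(* Let $\omega\in\{0,\infty\}$. Let $\Gamma_M$ ($M>0$) be a family of nonatomic routing games on a fixed graph with fixed OD pairs $\mathcal I$, path sets $\mathcal P^i$ and edge costs $(c_e)_{e\in\mathcal E}$, in which OD pair $i$ has demand $m^i=\lambda^i M$ for fixed constants $\lambda^i>0$ with $\sum_i\lambda^i=1$. Let $c$ be a benchmark for $(c_e)$ at $\omega$ and suppose the network is tight relative to $c$ at $\omega$, i.e. $0<\alpha<\infty$ where $\alpha=\max_{i\in\mathcal I}\min_{p\in\mathcal P^i}\max_{e\in p}\alpha_e$ and $\alpha_e=\lim_{x\to\omega}c_e(x)/c(x)$. Then $\lim_{M\to\omega}\mathrm{PoA}(\Gamma_M)=1$.
   Context: A nonatomic routing game consists of: a finite directed multigraph with edge set $\mathcal E$; a finite set $\mathcal I$ of OD pairs, each $i$ with demand $m^i\ge 0$ and a nonempty finite set $\mathcal P^i$ of paths from its origin to its destination, the $\mathcal P^i$ pairwise disjoint, $\mathcal P=\bigcup_i\mathcal P^i$; and continuous nondecreasing edge costs $c_e:[0,\infty)\to[0,\infty)$. Total inflow $M=\sum_i m^i>0$. Feasible flows: $f\in\mathbb R_+^{\mathcal P}$ with $\sum_{p\in\mathcal P^i}f_p=m^i$; loads $x_e=\sum_{p\ni e}f_p$; path costs $c_p(f)=\sum_{e\in p}c_e(x_e)$. A Wardrop equilibrium is a feasible $f^*$ with $c_p(f^* )\le c_{p'}(f^* )$ whenever $p,p'\in\mathcal P^i$ and $f^*_p>0$. Social cost $L(x)=\sum_e x_ec_e(x_e)$;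 $\mathrm{Opt}$ its minimum over feasible loads, $\mathrm{Eq}=L(x^* )$ at an equilibrium load, $\mathrm{PoA}=\mathrm{Eq}/\mathrm{Opt}$, with $\mathrm{Opt}>0$ assumed throughout (otherwise $\mathrm{PoA}:=1$). A function $g:(0,\infty)\to(0,\infty)$ is regularly varying at $\omega$ if $\lim_{t\to\omega}g(tx)/g(t)$ is finite and nonzero for all $x>0$; a regularly varying (at $\omega$) $c$ is a benchmark for $(c_e)$ at $\omega$ if $\alpha_e=\lim_{x\to\omega}c_e(x)/c(x)\in[0,\infty]$ exists for every edge $e$. *)

theory Defs
  imports "HOL-Analysis.Analysis"
begin

definition is_path :: "'e set \<Rightarrow> ('e \<Rightarrow> 'v) \<Rightarrow> ('e \<Rightarrow> 'v) \<Rightarrow> 'v \<Rightarrow> 'v \<Rightarrow> 'e list \<Rightarrow> bool" where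
  "is_path E src tgt u v es \<longleftrightarrow>
     es \<noteq> [] \<and> set es \<subseteq> E \<and> src (hd es) = u \<and> tgt (last es) = v \<and>
     (\<forall>k. Suc k < length es \<longrightarrow> tgt (es ! k) = src (es ! Suc k)) \<and>
     distinct (u # map tgt es)"

definition load :: "'i set \<Rightarrow> ('i \<Rightarrow> 'e list set) \<Rightarrow> ('e list \<Rightarrow> real) \<Rightarrow> 'e \<Rightarrow> real" where
  "load I P f e = (\<Sum>p\<in>{p \<in> (\<Union>i\<in>I. P i). e \<in> set p}. f p)"

definition path_cost :: "('e \<Rightarrow> real \<Rightarrow> real) \<Rightarrow> 'i set \<Rightarrow> ('i \<Rightarrow> 'e list set) \<Rightarrow> ('e list \<Rightarrow> real) \<Rightarrow> 'e list \<Rightarrow> real" where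
  "path_cost ce I P f p = (\<Sum>e\<in>set p. ce e (load I P f e))"

definition feasible :: "'i set \<Rightarrow> ('i \<Rightarrow> 'e list set) \<Rightarrow> ('i \<Rightarrow> real) \<Rightarrow> ('e list \<Rightarrow> real) \<Rightarrow> bool" where
  "feasible I P m f \<longleftrightarrow> (\<forall>p\<in>(\<Union>i\<in>I. P i). 0 \<le> f p) \<and> (\<forall>i\<in>I. (\<Sum>p\<in>P i. f p) = m i)"

definition wardrop_eq :: "('e \<Rightarrow> real \<Rightarrow> real) \<Rightarrow> 'i set \<Rightarrow> ('i \<Rightarrow> 'e list set) \<Rightarrow> ('i \<Rightarrow> real) \<Rightarrow> ('e list \<Rightarrow> real) \<Rightarrow> bool" where
  "wardrop_eq ce I P m f \<longleftrightarrow> feasible I P m f \<and>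
     (\<forall>i\<in>I. \<forall>p\<in>P i. \<forall>p'\<in>P i. 0 < f p \<longrightarrow> path_cost ce I P f p \<le> path_cost ce I P f p')"

definition social_cost :: "'e set \<Rightarrow> ('e \<Rightarrow> real \<Rightarrow> real) \<Rightarrow> 'i set \<Rightarrow> ('i \<Rightarrow> 'e list set) \<Rightarrow> ('e list \<Rightarrow> real) \<Rightarrow> real" where
  "social_cost E ce I P f = (\<Sum>e\<in>E. load I P f e * ce e (load I P f e))"

definition opt :: "'e set \<Rightarrow> ('e \<Rightarrow> real \<Rightarrow> real) \<Rightarrow> 'i set \<Rightarrow> ('i \<Rightarrow> 'e list set) \<Rightarrow> ('i \<Rightarrow> real) \<Rightarrow> real" where
  "opt E ce I P m = Inf {social_cost E ce I P f | f. feasible I P m f}"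

text \<open>Price of anarchy computed at an equilibrium flow f (all equilibria have the same
  social cost); PoA := 1 if Opt = 0.\<close>
definition poa :: "'e set \<Rightarrow> ('e \<Rightarrow> real \<Rightarrow> real) \<Rightarrow> 'i set \<Rightarrow> ('i \<Rightarrow> 'e list set) \<Rightarrow> ('i \<Rightarrow> real) \<Rightarrow> ('e list \<Rightarrow> real) \<Rightarrow> real" where
  "poa E ce I P m f = (if opt E ce I P m = 0 then 1 else social_cost E ce I P f / opt E ce I P m)"

text \<open>Regular variation at the point encoded by filter F (at_right 0 or at_top).\<close>
definition regularly_varying :: "real filter \<Rightarrow> (real \<Rightarrow> real) \<Rightarrow> bool" where
  "regularly_varying F g \<longleftrightarrow> (\<forall>t>0. 0 < g t) \<and>
     (\<forall>x>0. \<exists>L. L \<noteq> 0 \<and> ((\<lambda>t. g (t * x) / g t) \<longlongrightarrow> L) F)"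

definition tight_alpha :: "'i set \<Rightarrow> ('i \<Rightarrow> 'e list set) \<Rightarrow> ('e \<Rightarrow> ereal) \<Rightarrow> ereal" where
  "tight_alpha I P \<alpha> = Max ((\<lambda>i. Min ((\<lambda>p. Max (\<alpha> ` set p)) ` P i)) ` I)"

end

theory Submission
  imports Defs
begin

text \<open>Measure all costs in units of \<open>M c(M)\<close>. \<open>Opt\<close> is at least a fixed multiple of this
  unit: some OD pair has an edge with \<open>\<alpha>\<^sub>e \<ge> \<alpha> > 0\<close> on each of its paths, and one of these
  paths carries a fixed fraction of the demand. Edges with \<open>\<alpha>\<^sub>e = \<infinity>\<close> carry only \<open>o(M)\<close> flow in
  a near-optimal flow, and moving that flow onto paths with finite \<open>\<alpha>\<^sub>e\<close> costs \<open>o(M c(M))\<close>.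
  On the remaining edges, monotonicity and regular variation of \<open>c\<close> with index \<open>\<rho> \<ge> 0\<close> give
  \<open>c\<^sub>e(z) = \<alpha>\<^sub>e (z/M)\<^sup>\<rho> c(M) + o(c(M))\<close> uniformly for \<open>z \<in> [\<eta> M, M]\<close>. For exact power costs
  Young's inequality gives \<open>y c\<^sub>e(x) \<le> (y c\<^sub>e(y) + \<rho> x c\<^sub>e(x)) / (\<rho> + 1)\<close>; inserted into the
  variational inequality of the equilibrium \<open>x\<close> it yields \<open>Eq \<le> L(y) + o(M c(M))\<close> for every
  feasible \<open>y\<close> avoiding the edges with \<open>\<alpha>\<^sub>e = \<infinity>\<close>. Hence \<open>Eq \<le> Opt + o(M c(M)) = (1 + o(1)) Opt\<close>.\<close>

section \<open>Monotone functions close to a power law\<close>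

lemma Young_powr_weighted:
  fixes s t \<rho> :: real
  assumes "0 < s" "0 < t" "0 \<le> \<rho>"
  shows "t * s powr \<rho> \<le> 1/(\<rho>+1) * t powr (\<rho>+1) + \<rho>/(\<rho>+1) * s powr (\<rho>+1)"
proof -
  have "(t powr (\<rho>+1)) powr (1/(\<rho>+1)) * (s powr (\<rho>+1)) powr (\<rho>/(\<rho>+1))
        \<le> 1/(\<rho>+1) * t powr (\<rho>+1) + \<rho>/(\<rho>+1) * s powr (\<rho>+1)"
    using assms by (intro Youngs_inequality_0) (auto simp: field_simps)
  moreover have "(t powr (\<rho>+1)) powr (1/(\<rho>+1)) = t" "(s powr (\<rho>+1)) powr (\<rho>/(\<rho>+1)) = s powr \<rho>"
    using assms by (simp_all add: powr_powr)
  ultimately show ?thesis by simp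
qed

definition near_power_law ::
    "(real \<Rightarrow> real) \<Rightarrow> real \<Rightarrow> real \<Rightarrow> real \<Rightarrow> real \<Rightarrow> real \<Rightarrow> real \<Rightarrow> bool" where
  "near_power_law h a \<rho> \<eta> \<delta> M C \<longleftrightarrow>
     (\<forall>z. \<eta> * M \<le> z \<and> z \<le> M \<longrightarrow> \<bar>h z - a * (z/M) powr \<rho> * C\<bar> \<le> \<delta> * C)"

lemma near_power_lawD:
  "near_power_law h a \<rho> \<eta> \<delta> M C \<Longrightarrow> \<eta> * M \<le> z \<Longrightarrow> z \<le> M \<Longrightarrow>
     a * (z/M) powr \<rho> * C - \<delta> * C \<le> h z \<and> h z \<le> a * (z/M) powr \<rho> * C + \<delta> * C"
  unfolding near_power_law_def by (auto simp: abs_le_iff)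

lemma near_power_law_smoothness_core:
  fixes h :: "real \<Rightarrow> real"
  assumes h: "near_power_law h a \<rho> \<eta> \<delta> M C"
    and M: "0 < M" and C: "0 < C" and a: "0 \<le> a" and \<rho>: "0 \<le> \<rho>" and \<eta>: "0 < \<eta>" and \<delta>: "0 \<le> \<delta>"
    and u: "\<eta> * M \<le> u" "u \<le> M" and v: "\<eta> * M \<le> v" "v \<le> M"
  shows "v * h u \<le> 1/(\<rho>+1) * (v * h v) + \<rho>/(\<rho>+1) * (u * h u) + 2 * \<delta> * M * C"
proof -
  define lw mw where "lw = 1/(\<rho>+1)" and "mw = \<rho>/(\<rho>+1)"
  have w: "0 \<le> lw" "0 \<le> mw" "lw + mw = 1" using \<rho> by (auto simp: lw_def mw_def field_simps)
  define s t where "s = u/M" and "t = v/M"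
  have "0 < \<eta> * M" using \<eta> M by simp
  then have st: "0 < s" "s \<le> 1" "0 < t" "t \<le> 1" "u = s*M" "v = t*M"
    using u v M by (auto simp: s_def t_def)
  have hu: "a * s powr \<rho> * C - \<delta> * C \<le> h u" "h u \<le> a * s powr \<rho> * C + \<delta> * C"
    using near_power_lawD[OF h u] by (simp_all add: s_def)
  have hv: "a * t powr \<rho> * C - \<delta> * C \<le> h v"
    using near_power_lawD[OF h v] by (simp add: t_def)
  have v_lower: "t*M * (a * t powr \<rho> * C) \<le> v * h v + \<delta>*M*C"
  proof -
    have "t*M * (a * t powr \<rho> * C - \<delta> * C) \<le> v * h v"
      using hv st M by (simp add: mult_left_mono)
    moreover have "t * (\<delta>*M*C) \<le> \<delta>*M*C" using st \<delta> M C by (simp add: mult_left_le_one_le)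
    ultimately show ?thesis by (simp add: algebra_simps)
  qed
  have u_lower: "s*M * (a * s powr \<rho> * C) \<le> u * h u + \<delta>*M*C"
  proof -
    have "s*M * (a * s powr \<rho> * C - \<delta> * C) \<le> u * h u"
      using hu(1) st M by (simp add: mult_left_mono)
    moreover have "s * (\<delta>*M*C) \<le> \<delta>*M*C" using st \<delta> M C by (simp add: mult_left_le_one_le)
    ultimately show ?thesis by (simp add: algebra_simps)
  qed
  have "v * h u \<le> t*M * (a * s powr \<rho> * C + \<delta> * C)"
    using hu(2) st M by (simp add: mult_left_mono)
  also have "\<dots> = M*C*a * (t * s powr \<rho>) + t * (\<delta>*M*C)" by (simp add: algebra_simps)
  also have "\<dots> \<le> M*C*a * (lw * t powr (\<rho>+1) + mw * s powr (\<rho>+1)) + \<delta>*M*C"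
    using Young_powr_weighted[OF st(1,3) \<rho>] st \<delta> M C a
    by (intro add_mono mult_left_mono) (auto simp: lw_def mw_def mult_left_le_one_le)
  also have "\<dots> = lw * (t*M * (a * t powr \<rho> * C)) + mw * (s*M * (a * s powr \<rho> * C)) + \<delta>*M*C"
    using st by (simp add: powr_add algebra_simps)
  also have "\<dots> \<le> lw * (v * h v + \<delta>*M*C) + mw * (u * h u + \<delta>*M*C) + \<delta>*M*C"
    using v_lower u_lower w \<delta> M by (intro add_mono mult_left_mono) auto
  also have "\<dots> = lw * (v * h v) + mw * (u * h u) + 2 * \<delta> * M * C"
  proof -
    have "lw * (\<delta>*M*C) + mw * (\<delta>*M*C) = \<delta>*M*C" using w(3) by (simp flip: distrib_right)
    then show ?thesis by (simp add: algebra_simps)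
  qed
  finally show ?thesis by (simp add: lw_def mw_def)
qed

lemma near_power_law_smoothness:
  fixes h :: "real \<Rightarrow> real"
  assumes h: "near_power_law h a \<rho> \<eta> \<delta> M C" and mono: "mono_on {0..} h"
    and nonneg: "\<And>x. 0 \<le> x \<Longrightarrow> 0 \<le> h x" and hM: "h M \<le> (a+1) * C"
    and M: "0 < M" and C: "0 < C" and a: "0 \<le> a" and \<rho>: "0 \<le> \<rho>" and \<eta>: "0 < \<eta>" and \<delta>: "0 \<le> \<delta>"
    and x: "0 \<le> x" "x \<le> M" and y: "0 \<le> y" "y \<le> M"
  shows "y * h x \<le> 1/(\<rho>+1) * (y * h y) + \<rho>/(\<rho>+1) * (x * h x) + (\<eta>*(a+1) + 2*\<delta>) * M * C"
proof -
  have h_le: "h u \<le> (a+1) * C" if "0 \<le> u" "u \<le> M" for u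
    using mono_onD[OF mono, of u M] that hM by auto
  have w: "0 \<le> \<rho>/(\<rho>+1)" "\<rho>/(\<rho>+1) \<le> 1" using \<rho> by auto
  have rest: "0 \<le> \<eta>*(a+1)*M*C" "0 \<le> \<delta>*M*C" using \<eta> a M C \<delta> by auto
  consider "y \<le> \<eta>*M" | "\<eta>*M < y" "x \<le> \<eta>*M" | "\<eta>*M < y" "\<eta>*M < x" by linarith
  then show ?thesis
  proof cases
    case 1
    then have "y * h x \<le> (\<eta>*M) * ((a+1) * C)"
      using h_le[OF x] nonneg[OF x(1)] y by (intro mult_mono) auto
    moreover have "0 \<le> 1/(\<rho>+1) * (y * h y) + \<rho>/(\<rho>+1) * (x * h x)"
      using nonneg x y \<rho> by auto
    ultimately show ?thesis using rest by (simp add: algebra_simps)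
  next
    case 2
    have "\<eta> \<le> 1"
    proof (rule ccontr)
      assume "\<not> \<eta> \<le> 1"
      then have "M < \<eta> * M" using M by simp
      then show False using 2 y by linarith
    qed
    have "y * h x \<le> y * h (\<eta>*M)"
      using 2 x y mono_onD[OF mono, of x "\<eta>*M"] by (intro mult_left_mono) auto
    also have "\<dots> \<le> 1/(\<rho>+1) * (y * h y) + \<rho>/(\<rho>+1) * (\<eta>*M * h (\<eta>*M)) + 2*\<delta>*M*C"
      using 2 y \<eta> M \<open>\<eta> \<le> 1\<close> by (intro near_power_law_smoothness_core[OF h M C a \<rho> \<eta> \<delta>]) auto
    also have "\<rho>/(\<rho>+1) * (\<eta>*M * h (\<eta>*M)) \<le> 1 * (\<eta>*M * ((a+1) * C))"
      using w \<eta> M h_le[of "\<eta>*M"] \<open>\<eta> \<le> 1\<close> nonneg[of "\<eta>*M"] by (intro mult_mono) auto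
    finally have "y * h x \<le> 1/(\<rho>+1) * (y * h y) + \<eta>*M*((a+1)*C) + 2*\<delta>*M*C" by simp
    moreover have "0 \<le> \<rho>/(\<rho>+1) * (x * h x)" using nonneg[OF x(1)] x w by (intro mult_nonneg_nonneg) auto
    ultimately show ?thesis by (simp add: algebra_simps)
  next
    case 3
    then have "y * h x \<le> 1/(\<rho>+1) * (y * h y) + \<rho>/(\<rho>+1) * (x * h x) + 2*\<delta>*M*C"
      using near_power_law_smoothness_core[OF h M C a \<rho> \<eta> \<delta>, of x y] x y by auto
    then show ?thesis using rest by (simp add: algebra_simps)
  qed
qed

lemma near_power_law_increment:
  fixes h :: "real \<Rightarrow> real"
  assumes h: "near_power_law h a \<rho> \<eta> \<delta> M C"
    and M: "0 < M" and C: "0 < C" and a: "0 \<le> a" and \<rho>: "0 \<le> \<rho>" and \<eta>: "0 < \<eta>" and \<theta>: "0 \<le> \<theta>"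
    and x: "\<eta> * M \<le> x" "x \<le> x'" "x' \<le> M" "x' \<le> x + \<theta> * M"
  shows "h x' - h x \<le> (a * ((1 + \<theta>/\<eta>) powr \<rho> - 1) + 2*\<delta>) * C"
proof -
  define s s' where "s = x/M" and "s' = x'/M"
  have s: "\<eta> \<le> s" "s \<le> s'" "s' \<le> 1" "s' \<le> s + \<theta>"
    using x M by (auto simp: s_def s'_def field_simps)
  have "\<eta> * (\<theta>/\<eta>) \<le> s * (\<theta>/\<eta>)" using s(1) \<theta> \<eta> by (intro mult_right_mono) auto
  then have "\<theta> \<le> s * (\<theta>/\<eta>)" using \<eta> by simp
  then have "s' \<le> s * (1 + \<theta>/\<eta>)" using s(4) by (simp add: algebra_simps)
  then have "s' powr \<rho> \<le> s powr \<rho> * (1 + \<theta>/\<eta>) powr \<rho>"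
    using s \<eta> \<theta> \<rho> by (simp add: powr_mono2 flip: powr_mult)
  moreover have "s powr \<rho> * ((1 + \<theta>/\<eta>) powr \<rho> - 1) \<le> 1 * ((1 + \<theta>/\<eta>) powr \<rho> - 1)"
    using s \<eta> \<theta> \<rho> by (intro mult_right_mono powr_le1 ge_one_powr_ge_zero[THEN diff_ge_0_iff_ge[THEN iffD2]]) auto
  ultimately have gap: "s' powr \<rho> - s powr \<rho> \<le> (1 + \<theta>/\<eta>) powr \<rho> - 1"
    by (simp add: algebra_simps)
  have "h x' - h x \<le> (a * s' powr \<rho> * C + \<delta> * C) - (a * s powr \<rho> * C - \<delta> * C)"
    unfolding s_def s'_def using near_power_lawD[OF h x(1)] near_power_lawD[OF h _ x(3)] x by linarith
  also have "\<dots> = (a * (s' powr \<rho> - s powr \<rho>) + 2*\<delta>) * C" by (simp add: algebra_simps)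
  also have "\<dots> \<le> (a * ((1 + \<theta>/\<eta>) powr \<rho> - 1) + 2*\<delta>) * C"
    using gap a C by (intro mult_right_mono add_right_mono mult_left_mono) auto
  finally show ?thesis .
qed

lemma near_power_law_continuity:
  fixes h :: "real \<Rightarrow> real"
  assumes h: "near_power_law h a \<rho> \<eta> \<delta> M C" and mono: "mono_on {0..} h"
    and nonneg: "\<And>x. 0 \<le> x \<Longrightarrow> 0 \<le> h x" and hM: "h M \<le> (a+1) * C"
    and M: "0 < M" and C: "0 < C" and a: "0 \<le> a" and \<rho>: "0 \<le> \<rho>" and \<eta>: "0 < \<eta>" and \<delta>: "0 \<le> \<delta>"
    and \<theta>: "0 \<le> \<theta>" and x: "0 \<le> x" "x \<le> M" and x': "0 \<le> x'" "x' \<le> M" "x' \<le> x + \<theta> * M"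
  shows "x' * h x' \<le> x * h x + ((\<theta> + \<eta>)*(a+1) + a*((1 + \<theta>/\<eta>) powr \<rho> - 1) + 2*\<delta>) * M * C"
proof -
  define W where "W = (1 + \<theta>/\<eta>) powr \<rho> - 1"
  have "1 \<le> (1 + \<theta>/\<eta>) powr \<rho>" using \<theta> \<eta> \<rho> by (intro ge_one_powr_ge_zero) auto
  then have W: "0 \<le> W" by (simp add: W_def)
  have h_le: "h u \<le> (a+1) * C" if "0 \<le> u" "u \<le> M" for u
    using mono_onD[OF mono, of u M] that hM by auto
  have rest: "0 \<le> \<theta>*(a+1)*M*C" "0 \<le> \<eta>*(a+1)*M*C" "0 \<le> (a*W + 2*\<delta>)*M*C"
    using \<theta> \<eta> a M C \<delta> W by auto
  show ?thesis
  proof (cases "x' \<le> x")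
    case True
    then have "x' * h x' \<le> x * h x"
      using x' nonneg mono_onD[OF mono, of x' x] by (intro mult_mono) auto
    then show ?thesis using rest by (simp add: W_def[symmetric] algebra_simps)
  next
    case False
    have hx: "0 \<le> h x" "h x \<le> h x'" "h x' \<le> (a+1) * C"
      using nonneg x False x' mono_onD[OF mono, of x x'] h_le by auto
    have far: "(x' - x) * h x' \<le> (\<theta>*M) * ((a+1) * C)"
      using False x' hx by (intro mult_mono) auto
    have near: "x * (h x' - h x) \<le> \<eta>*(a+1)*M*C + (a*W + 2*\<delta>)*M*C"
    proof (cases "x \<le> \<eta>*M")
      case True
      then have "x * (h x' - h x) \<le> (\<eta>*M) * ((a+1) * C)"
        using x hx by (intro mult_mono) auto
      then show ?thesis using rest by (simp add: algebra_simps)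
    next
      case False
      then have "h x' - h x \<le> (a*W + 2*\<delta>) * C"
        unfolding W_def using \<open>\<not> x' \<le> x\<close> x'
        by (intro near_power_law_increment[OF h M C a \<rho> \<eta> \<theta>]) auto
      then have "x * (h x' - h x) \<le> M * ((a*W + 2*\<delta>) * C)"
        using x hx by (intro mult_mono) auto
      then show ?thesis using rest by (simp add: algebra_simps)
    qed
    have "x' * h x' = (x' - x) * h x' + x * (h x' - h x) + x * h x" by (simp add: algebra_simps)
    then show ?thesis using far near by (simp add: W_def[symmetric] algebra_simps)
  qed
qed

lemma monotone_near_power_between:
  fixes h :: "real \<Rightarrow> real"
  assumes mono: "mono_on {0..} h" and M: "0 < M" and C: "0 < C" and a: "0 \<le> a" and \<rho>: "0 \<le> \<rho>"
    and u: "0 < u\<^sub>0" "u\<^sub>0 * M \<le> z" "z \<le> u\<^sub>1 * M"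
    and approx: "\<bar>h (M * u\<^sub>0) / C - a * u\<^sub>0 powr \<rho>\<bar> < \<delta>/2" "\<bar>h (M * u\<^sub>1) / C - a * u\<^sub>1 powr \<rho>\<bar> < \<delta>/2"
    and gap: "a * (u\<^sub>1 powr \<rho> - u\<^sub>0 powr \<rho>) \<le> \<delta>/2"
  shows "\<bar>h z - a * (z/M) powr \<rho> * C\<bar> \<le> \<delta> * C"
proof -
  define s where "s = z/M"
  have s: "u\<^sub>0 \<le> s" "s \<le> u\<^sub>1" unfolding s_def using u M by (simp_all add: field_simps)
  have "0 < z" using u M by (metis mult_pos_pos order_less_le_trans)
  have "h (M * u\<^sub>0) \<le> h z" "h z \<le> h (M * u\<^sub>1)"
    using u M s \<open>0 < z\<close> by (auto intro!: mono_onD[OF mono] simp: mult.commute)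
  then have "h (M * u\<^sub>0) / C \<le> h z / C" "h z / C \<le> h (M * u\<^sub>1) / C"
    using C by (simp_all add: divide_right_mono)
  moreover have "a * u\<^sub>0 powr \<rho> \<le> a * s powr \<rho>" "a * s powr \<rho> \<le> a * u\<^sub>1 powr \<rho>"
    using s u a \<rho> by (auto intro!: mult_left_mono powr_mono2)
  moreover have "a * u\<^sub>1 powr \<rho> - a * u\<^sub>0 powr \<rho> \<le> \<delta>/2" using gap by (simp add: right_diff_distrib)
  ultimately have "\<bar>h z / C - a * s powr \<rho>\<bar> \<le> \<delta>" using approx unfolding abs_less_iff abs_le_iff by linarith
  then have "\<bar>h z / C - a * s powr \<rho>\<bar> * C \<le> \<delta> * C" using C by (simp add: mult_right_mono)
  moreover have "h z - a * s powr \<rho> * C = (h z / C - a * s powr \<rho>) * C" using C by (simp add: field_simps)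
  ultimately show ?thesis using C by (simp add: s_def abs_mult)
qed

lemma one_minus_two_powr_le:
  fixes y :: real assumes "0 \<le> y" shows "1 - 2 powr (-y) \<le> y"
proof -
  have "1 + (-y * ln 2) \<le> 2 powr (-y)" using exp_ge_add_one_self[of "-y * ln 2"] by (simp add: powr_def mult.commute)
  moreover have "y * ln 2 \<le> y" using assms ln_2_less_1 by (simp add: mult_left_le)
  ultimately show ?thesis by linarith
qed

lemma exists_continuity_radius:
  fixes \<eta> d A \<rho> :: real
  assumes "0 < \<eta>" "0 < d" "0 \<le> A"
  obtains \<theta> where "0 < \<theta>" "\<theta> * (A+1) + A * ((1 + \<theta>/\<eta>) powr \<rho> - 1) \<le> d"
proof -
  have "((\<lambda>\<theta>. \<theta> * (A+1) + A * ((1 + \<theta>/\<eta>) powr \<rho> - 1)) \<longlongrightarrow> 0) (at_right 0)"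
    using assms by (intro tendsto_eq_intros) auto
  then have "eventually (\<lambda>\<theta>. \<theta> * (A+1) + A * ((1 + \<theta>/\<eta>) powr \<rho> - 1) < d) (at_right 0)"
    using assms(2) by (rule order_tendstoD)
  then have "eventually (\<lambda>\<theta>. 0 < \<theta> \<and> \<theta> * (A+1) + A * ((1 + \<theta>/\<eta>) powr \<rho> - 1) < d) (at_right 0)"
    by (intro eventually_conj eventually_at_right_less)
  then obtain \<theta> where "0 < \<theta>" "\<theta> * (A+1) + A * ((1 + \<theta>/\<eta>) powr \<rho> - 1) < d"
    using eventually_happens[of _ "at_right (0::real)"] by auto
  then show ?thesis using that by simp
qed

lemma dyadic_power_gap:
  fixes n :: nat
  assumes \<rho>: "0 \<le> \<rho>" and n: "0 < n"
  shows "(2 powr (-(real k/n))) powr \<rho> - (2 powr (-(real (Suc k)/n))) powr \<rho> \<le> \<rho>/n"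
proof -
  have "-(real (Suc k)/n) * \<rho> = -(real k/n) * \<rho> + -(\<rho>/n)"
    using n by (simp add: field_simps)
  then have "2 powr (-(real (Suc k)/n) * \<rho>) = 2 powr (-(real k/n) * \<rho>) * 2 powr (-(\<rho>/n))"
    by (metis powr_add)
  then have "(2 powr (-(real k/n))) powr \<rho> - (2 powr (-(real (Suc k)/n))) powr \<rho>
      = 2 powr (-(real k/n) * \<rho>) * (1 - 2 powr (-(\<rho>/n)))"
    by (simp add: powr_powr algebra_simps)
  also have "\<dots> \<le> 1 * (\<rho>/n)"
  proof (rule mult_mono)
    have "2 powr (-(real k/n) * \<rho>) \<le> 2 powr 0" using \<rho> by (intro powr_mono) auto
    then show "2 powr (-(real k/n) * \<rho>) \<le> 1" by simp
    show "1 - 2 powr (-(\<rho>/n)) \<le> \<rho>/n" using \<rho> n by (intro one_minus_two_powr_le) auto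
    have "2 powr (-(\<rho>/n)) \<le> 2 powr 0" using \<rho> by (intro powr_mono) auto
    then show "0 \<le> 1 - 2 powr (-(\<rho>/n))" by simp
  qed simp
  finally show ?thesis by simp
qed

lemma dyadic_bracket:
  fixes s :: real and n :: nat
  assumes n: "0 < n" and s: "0 < s" "s \<le> 1"
  shows "\<exists>k. real k \<le> n * log 2 (1/s) \<and> 2 powr (-(real (Suc k)/n)) \<le> s \<and> s \<le> 2 powr (-(real k/n))"
proof -
  define \<sigma> where "\<sigma> = log 2 (1/s)"
  have \<sigma>: "0 \<le> \<sigma>" "s = 2 powr (-\<sigma>)" using s by (simp_all add: \<sigma>_def log_divide powr_minus)
  define k where "k = nat \<lfloor>n * \<sigma>\<rfloor>"
  have "real k = of_int \<lfloor>n * \<sigma>\<rfloor>" using \<sigma> by (simp add: k_def)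
  then have k: "real k \<le> n * \<sigma>" "n * \<sigma> < real (Suc k)" by linarith+
  have "real k/n \<le> \<sigma>" "\<sigma> \<le> real (Suc k)/n" using k n by (simp_all add: field_simps)
  then have "2 powr (-(real (Suc k)/n)) \<le> s" "s \<le> 2 powr (-(real k/n))" by (simp_all add: \<sigma>(2))
  then show ?thesis using k(1) by (auto simp: \<sigma>_def)
qed

text \<open>Monotonicity of \<open>h\<close> upgrades convergence at the finitely many grid points \<open>2 powr (-k/n)\<close>
  to convergence uniform on \<open>[\<eta> M, M]\<close>.\<close>

lemma near_power_law_dyadic_grid:
  fixes h :: "real \<Rightarrow> real" and n N :: nat
  assumes mono: "mono_on {0..} h" and M: "0 < M" and C: "0 < C" and a: "0 \<le> a" and \<rho>: "0 \<le> \<rho>"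
    and n: "0 < n" and \<eta>: "0 < \<eta>" and N: "n * log 2 (1/\<eta>) \<le> N" and an: "a * (\<rho>/n) \<le> \<delta>/2"
    and approx: "\<And>k. k \<le> Suc N \<Longrightarrow>
                   \<bar>h (M * 2 powr (-(real k/n))) / C - a * (2 powr (-(real k/n))) powr \<rho>\<bar> < \<delta>/2"
  shows "near_power_law h a \<rho> \<eta> \<delta> M C"
  unfolding near_power_law_def
proof safe
  fix z assume z: "\<eta> * M \<le> z" "z \<le> M"
  define g where "g k = 2 powr (-(real k/real n))" for k
  have "0 < z" using z M \<eta> by (smt (verit) mult_pos_pos)
  then have "0 < z/M" "z/M \<le> 1" "\<eta> \<le> z/M" using z M by (simp_all add: field_simps)
  then obtain k where k: "real k \<le> n * log 2 (M/z)" "g (Suc k) \<le> z/M" "z/M \<le> g k"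
    using dyadic_bracket[OF n, of "z/M"] by (auto simp: g_def)
  have "M/z \<le> 1/\<eta>" using \<open>\<eta> \<le> z/M\<close> \<eta> M \<open>0 < z\<close> by (simp add: field_simps)
  then have "log 2 (M/z) \<le> log 2 (1/\<eta>)" using M \<open>0 < z\<close> \<eta> by simp
  then have "real k \<le> N" using k(1) N by (meson mult_left_mono of_nat_0_le_iff order_trans)
  show "\<bar>h z - a * (z/M) powr \<rho> * C\<bar> \<le> \<delta> * C"
  proof (rule monotone_near_power_between[OF mono M C a \<rho>])
    show "0 < g (Suc k)" "g (Suc k) * M \<le> z" "z \<le> g k * M"
      using k M by (simp_all add: g_def field_simps)
    show "\<bar>h (M * g (Suc k)) / C - a * g (Suc k) powr \<rho>\<bar> < \<delta>/2" "\<bar>h (M * g k) / C - a * g k powr \<rho>\<bar> < \<delta>/2"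
      using approx[of "Suc k"] approx[of k] \<open>real k \<le> N\<close> unfolding g_def by simp_all
    have "a * (g k powr \<rho> - g (Suc k) powr \<rho>) \<le> a * (\<rho>/n)"
      unfolding g_def using dyadic_power_gap[OF \<rho> n, of k] a by (intro mult_left_mono) auto
    then show "a * (g k powr \<rho> - g (Suc k) powr \<rho>) \<le> \<delta>/2" using an by linarith
  qed
qed

lemma eventually_near_power_law_dyadic:
  fixes h c :: "real \<Rightarrow> real" and F :: "real filter"
  assumes evpos: "eventually (\<lambda>M. 0 < M) F" and c: "\<And>t. 0 < t \<Longrightarrow> 0 < c t"
    and mono: "mono_on {0..} h" and a: "0 \<le> a" and \<rho>: "0 \<le> \<rho>"
    and lim: "\<And>u k n. 0 < n \<Longrightarrow> u = 2 powr (-(real k/real n)) \<Longrightarrow>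
                ((\<lambda>M. h (M * u) / c M) \<longlongrightarrow> a * u powr \<rho>) F"
    and \<delta>: "0 < \<delta>" and \<eta>: "0 < \<eta>"
  shows "eventually (\<lambda>M. near_power_law h a \<rho> \<eta> \<delta> M (c M)) F"
proof -
  define n :: nat where "n = nat \<lceil>2*a*\<rho>/\<delta>\<rceil> + 1"
  have n: "0 < n" by (simp add: n_def)
  have "2*a*\<rho>/\<delta> \<le> real n" unfolding n_def by linarith
  then have an: "a * (\<rho>/n) \<le> \<delta>/2" using \<delta> n by (simp add: field_simps)
  define N :: nat where "N = nat \<lceil>n * log 2 (1/\<eta>)\<rceil>"
  have N: "n * log 2 (1/\<eta>) \<le> N" unfolding N_def by linarith
  have "eventually (\<lambda>M. \<bar>h (M * 2 powr (-(real k/n))) / c M - a * (2 powr (-(real k/n))) powr \<rho>\<bar> < \<delta>/2) F"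
    for k using tendstoD[OF lim[OF n refl], of "\<delta>/2"] \<delta> by (simp add: dist_real_def)
  then have "eventually (\<lambda>M. 0 < M \<and> (\<forall>k\<in>{..Suc N}.
      \<bar>h (M * 2 powr (-(real k/n))) / c M - a * (2 powr (-(real k/n))) powr \<rho>\<bar> < \<delta>/2)) F"
    by (intro eventually_conj evpos eventually_ball_finite) auto
  then show ?thesis
    by (rule eventually_mono) (use mono c a \<rho> n \<eta> N an in \<open>auto intro!: near_power_law_dyadic_grid\<close>)
qed

section \<open>Regular variation\<close>

locale regular_variation =
  fixes c :: "real \<Rightarrow> real" and F :: "real filter"
  assumes regularly_varying: "regularly_varying F c"
    and eventually_pos: "eventually (\<lambda>M. 0 < M) F"
    and filterlim_scale: "\<And>u. 0 < u \<Longrightarrow> filterlim (\<lambda>M. M * u) F F"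
    and nontrivial: "F \<noteq> bot"
begin

lemma c_pos: "0 < t \<Longrightarrow> 0 < c t"
  using regularly_varying by (simp add: regularly_varying_def)

lemma c_nonzero: "0 < t \<Longrightarrow> c t \<noteq> 0"
  using c_pos by (simp add: less_imp_neq[symmetric])

definition rv_limit :: "real \<Rightarrow> real" where
  "rv_limit u = (SOME L. L \<noteq> 0 \<and> ((\<lambda>t. c (t * u) / c t) \<longlongrightarrow> L) F)"

lemma tendsto_rv_limit: "0 < u \<Longrightarrow> ((\<lambda>t. c (t * u) / c t) \<longlongrightarrow> rv_limit u) F"
  and rv_limit_nonzero: "0 < u \<Longrightarrow> rv_limit u \<noteq> 0"
proof -
  assume "0 < u"
  then obtain L where "L \<noteq> 0 \<and> ((\<lambda>t. c (t * u) / c t) \<longlongrightarrow> L) F"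
    using regularly_varying by (auto simp: regularly_varying_def)
  then have "rv_limit u \<noteq> 0 \<and> ((\<lambda>t. c (t * u) / c t) \<longlongrightarrow> rv_limit u) F"
    unfolding rv_limit_def by (rule someI)
  then show "((\<lambda>t. c (t * u) / c t) \<longlongrightarrow> rv_limit u) F" "rv_limit u \<noteq> 0" by auto
qed

lemma tendsto_cong_pos:
  assumes "(g \<longlongrightarrow> L) F" "\<And>t. 0 < t \<Longrightarrow> g t = g' t"
  shows "(g' \<longlongrightarrow> L) F"
proof -
  have "eventually (\<lambda>t. g t = g' t) F" using eventually_pos by (rule eventually_mono) (rule assms(2))
  then show ?thesis using assms(1) by (rule tendsto_cong[THEN iffD1])
qed

lemma rv_limit_pos: "0 < u \<Longrightarrow> 0 < rv_limit u"
proof -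
  assume u: "0 < u"
  have "eventually (\<lambda>t. 0 \<le> c (t * u) / c t) F"
    using eventually_pos by (rule eventually_mono) (use u c_pos in \<open>simp add: less_imp_le\<close>)
  then have "0 \<le> rv_limit u" using tendsto_lowerbound[OF tendsto_rv_limit[OF u] _ nontrivial] by simp
  then show ?thesis using rv_limit_nonzero[OF u] by simp
qed

lemma rv_limit_mult:
  assumes u: "0 < u" and v: "0 < v"
  shows "rv_limit (u * v) = rv_limit u * rv_limit v"
proof -
  have "((\<lambda>t. c (t * u * v) / c (t * u)) \<longlongrightarrow> rv_limit v) F"
    using filterlim_compose[OF tendsto_rv_limit[OF v] filterlim_scale[OF u]] by simp
  then have "((\<lambda>t. c (t * u * v) / c (t * u) * (c (t * u) / c t)) \<longlongrightarrow> rv_limit v * rv_limit u) F"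
    by (intro tendsto_mult tendsto_rv_limit u)
  then have "((\<lambda>t. c (t * (u * v)) / c t) \<longlongrightarrow> rv_limit v * rv_limit u) F"
    by (rule tendsto_cong_pos) (use u in \<open>simp add: c_nonzero mult.assoc\<close>)
  from tendsto_unique[OF nontrivial tendsto_rv_limit this] u v show ?thesis by simp
qed

lemma rv_limit_1: "rv_limit 1 = 1"
proof -
  have "((\<lambda>t. c (t * 1) / c t) \<longlongrightarrow> 1) F"
    by (rule tendsto_cong_pos[OF tendsto_const]) (simp add: c_nonzero)
  from tendsto_unique[OF nontrivial tendsto_rv_limit this] show ?thesis by simp
qed

lemma rv_limit_power: "0 < u \<Longrightarrow> rv_limit (u ^ k) = rv_limit u ^ k"
  by (induction k) (simp_all add: rv_limit_1 rv_limit_mult)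

text \<open>In fact \<open>rv_limit u = u powr rv_index\<close> for all \<open>u > 0\<close>, but that needs the measurability
  argument of the characterisation theorem; monotone costs only require dyadic \<open>u\<close>.\<close>

definition rv_index :: real where
  "rv_index = - log 2 (rv_limit (1/2))"

lemma rv_limit_dyadic:
  assumes n: "0 < n"
  shows "rv_limit (2 powr (-(real k/real n))) = (2 powr (-(real k/real n))) powr rv_index"
proof -
  define r where "r = 2 powr (-(1/real n))"
  have r: "0 < r" "r ^ k = 2 powr (-(real k/real n))" for k
    unfolding r_def by (simp_all add: powr_realpow[symmetric] powr_powr)
  have "r ^ n = 1/2" using r(2)[of n] n by (simp add: powr_minus)
  then have "rv_limit (1/2) = rv_limit r ^ n" using rv_limit_power[OF r(1), of n] by (simp only:)
  then have "rv_limit (1/2) = rv_limit r powr real n"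
    using rv_limit_pos[OF r(1)] by (simp add: powr_realpow)
  then have "rv_limit r = rv_limit (1/2) powr (1/real n)"
    using n rv_limit_pos[OF r(1)] by (simp add: powr_powr)
  moreover have "rv_limit (1/2) = 2 powr (- rv_index)"
    unfolding rv_index_def using rv_limit_pos[of "1/2"] by simp
  ultimately have "rv_limit r powr real k = (2 powr (-(real k/real n))) powr rv_index"
    by (simp add: powr_powr mult.commute)
  then show ?thesis
    using rv_limit_power[OF r(1), of k] rv_limit_pos[OF r(1)] r(2) by (simp add: powr_realpow)
qed

lemma tendsto_scaled_ratio:
  assumes lim: "((\<lambda>x. h x / c x) \<longlongrightarrow> a) F" and u: "0 < u"
  shows "((\<lambda>M. h (M * u) / c M) \<longlongrightarrow> a * rv_limit u) F"
proof -
  have "((\<lambda>M. h (M * u) / c (M * u)) \<longlongrightarrow> a) F"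
    using filterlim_compose[OF lim filterlim_scale[OF u]] by simp
  then have "((\<lambda>M. h (M * u) / c (M * u) * (c (M * u) / c M)) \<longlongrightarrow> a * rv_limit u) F"
    by (intro tendsto_mult tendsto_rv_limit u)
  then show ?thesis
    by (rule tendsto_cong_pos) (use u in \<open>simp add: c_nonzero\<close>)
qed

lemma eventually_near_power_law:
  assumes mono: "mono_on {0..} h" and lim: "((\<lambda>x. h x / c x) \<longlongrightarrow> a) F"
    and a: "0 \<le> a" and \<rho>: "0 \<le> rv_index" and \<delta>: "0 < \<delta>" and \<eta>: "0 < \<eta>"
  shows "eventually (\<lambda>M. near_power_law h a rv_index \<eta> \<delta> M (c M)) F"
  using eventually_pos c_pos mono a \<rho> _ \<delta> \<eta>
proof (rule eventually_near_power_law_dyadic)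
  fix u k and n :: nat
  assume "0 < n" "u = 2 powr (-(real k/real n))"
  then show "((\<lambda>M. h (M * u) / c M) \<longlongrightarrow> a * u powr rv_index) F"
    using tendsto_scaled_ratio[OF lim, of u] rv_limit_dyadic by simp
qed

end

section \<open>Nonatomic routing games\<close>

lemma load_nonneg: "feasible I P m g \<Longrightarrow> 0 \<le> load I P g e"
  unfolding load_def feasible_def by (intro sum_nonneg) auto

lemma demand_nonneg: "feasible I P m g \<Longrightarrow> i \<in> I \<Longrightarrow> 0 \<le> m i"
  unfolding feasible_def by (metis (no_types, lifting) UN_I sum_nonneg)

locale network =
  fixes E :: "'e set" and I :: "'i set" and P :: "'i \<Rightarrow> 'e list set"
    and ce :: "'e \<Rightarrow> real \<Rightarrow> real"
  assumes finite_edges: "finite E" and finite_od_pairs: "finite I"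
    and finite_paths: "\<And>i. i \<in> I \<Longrightarrow> finite (P i)"
    and paths_nonempty: "\<And>i. i \<in> I \<Longrightarrow> P i \<noteq> {}"
    and path_nonempty: "\<And>i p. i \<in> I \<Longrightarrow> p \<in> P i \<Longrightarrow> p \<noteq> []"
    and path_edges: "\<And>i p. i \<in> I \<Longrightarrow> p \<in> P i \<Longrightarrow> set p \<subseteq> E"
    and disjoint_paths: "disjoint_family_on P I"
    and cost_mono: "\<And>e. e \<in> E \<Longrightarrow> mono_on {0..} (ce e)"
    and cost_nonneg: "\<And>e x. e \<in> E \<Longrightarrow> 0 \<le> x \<Longrightarrow> 0 \<le> ce e x"
begin

abbreviation all_paths :: "'e list set" where
  "all_paths \<equiv> \<Union>i\<in>I. P i"

abbreviation SC :: "('e list \<Rightarrow> real) \<Rightarrow> real" where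
  "SC g \<equiv> social_cost E ce I P g"

lemma finite_all_paths: "finite all_paths"
  using finite_od_pairs finite_paths by blast

lemma cost_monoD: "e \<in> E \<Longrightarrow> 0 \<le> x \<Longrightarrow> x \<le> y \<Longrightarrow> ce e x \<le> ce e y"
  by (rule mono_onD[OF cost_mono]) auto

lemma sum_all_paths: "(\<Sum>p\<in>all_paths. h p) = (\<Sum>i\<in>I. \<Sum>p\<in>P i. h p)"
  using finite_od_pairs finite_paths disjoint_paths
  by (intro sum.UNION_disjoint) (auto simp: disjoint_family_on_def)

lemma load_eq_sum_if: "load I P g e = (\<Sum>p\<in>all_paths. if e \<in> set p then g p else 0)"
  unfolding load_def by (rule sum.inter_filter[OF finite_all_paths])

lemma flow_le_load:
  assumes "feasible I P m g" "p \<in> all_paths" "e \<in> set p"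
  shows "g p \<le> load I P g e"
  unfolding load_def using assms
  by (intro member_le_sum) (auto simp: feasible_def intro: finite_subset[OF _ finite_all_paths])

lemma load_eq_0: "(\<And>p. p \<in> all_paths \<Longrightarrow> e \<in> set p \<Longrightarrow> y p = 0) \<Longrightarrow> load I P y e = 0"
  unfolding load_def by (intro sum.neutral) auto

lemma load_le_total_demand:
  assumes g: "feasible I P m g"
  shows "load I P g e \<le> (\<Sum>i\<in>I. m i)"
proof -
  have "load I P g e \<le> (\<Sum>p\<in>all_paths. g p)"
    unfolding load_def using g finite_all_paths by (intro sum_mono2) (auto simp: feasible_def)
  also have "\<dots> = (\<Sum>i\<in>I. m i)" using g by (simp add: sum_all_paths feasible_def)
  finally show ?thesis .
qed

lemma sum_load_mult:
  "(\<Sum>e\<in>E. load I P g e * w e) = (\<Sum>p\<in>all_paths. g p * (\<Sum>e\<in>set p. w e))"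
proof -
  have "(\<Sum>e\<in>E. load I P g e * w e) = (\<Sum>e\<in>E. \<Sum>p\<in>all_paths. if e \<in> set p then g p * w e else 0)"
    unfolding load_eq_sum_if sum_distrib_right by (intro sum.cong) auto
  also have "\<dots> = (\<Sum>p\<in>all_paths. \<Sum>e\<in>E. if e \<in> set p then g p * w e else 0)"
    by (rule sum.swap)
  also have "\<dots> = (\<Sum>p\<in>all_paths. g p * (\<Sum>e\<in>set p. w e))"
  proof (rule sum.cong[OF refl])
    fix p assume "p \<in> all_paths"
    then have "{e\<in>E. e \<in> set p} = set p" using path_edges by auto
    then show "(\<Sum>e\<in>E. if e \<in> set p then g p * w e else 0) = g p * (\<Sum>e\<in>set p. w e)"
      using finite_edges by (simp add: sum.inter_filter[symmetric] sum_distrib_left)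
  qed
  finally show ?thesis .
qed

lemma social_cost_eq_sum_paths: "SC g = (\<Sum>p\<in>all_paths. g p * path_cost ce I P g p)"
  unfolding social_cost_def path_cost_def by (rule sum_load_mult)

lemma load_cost_le_social_cost:
  assumes "feasible I P m g" "e \<in> E"
  shows "load I P g e * ce e (load I P g e) \<le> SC g"
  unfolding social_cost_def using load_nonneg[OF assms(1)] cost_nonneg assms(2) finite_edges
  by (intro member_le_sum mult_nonneg_nonneg) auto

lemma social_cost_ge_heavy_edge:
  assumes g: "feasible I P m g" and e: "e \<in> E" and x: "0 \<le> x" "x \<le> load I P g e"
  shows "x * ce e x \<le> SC g"
proof -
  have "x * ce e x \<le> load I P g e * ce e (load I P g e)"
    using x cost_nonneg[OF e x(1)] cost_monoD[OF e x] by (intro mult_mono) auto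
  also have "\<dots> \<le> SC g" by (rule load_cost_le_social_cost[OF g e])
  finally show ?thesis .
qed

lemma social_cost_nonneg:
  assumes "feasible I P m g" shows "0 \<le> SC g"
  unfolding social_cost_def using load_nonneg[OF assms] cost_nonneg
  by (intro sum_nonneg mult_nonneg_nonneg) auto

lemma min_path_cost_le: "i \<in> I \<Longrightarrow> p \<in> P i \<Longrightarrow> Min (path_cost ce I P f ` P i) \<le> path_cost ce I P f p"
  using finite_paths by simp

lemma od_cost_ge_min:
  assumes y: "feasible I P m y" and i: "i \<in> I"
  shows "m i * Min (path_cost ce I P f ` P i) \<le> (\<Sum>p\<in>P i. y p * path_cost ce I P f p)"
proof -
  have "m i * Min (path_cost ce I P f ` P i) = (\<Sum>p\<in>P i. y p * Min (path_cost ce I P f ` P i))"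
    using y i by (simp add: feasible_def flip: sum_distrib_right)
  also have "\<dots> \<le> (\<Sum>p\<in>P i. y p * path_cost ce I P f p)"
    using y i min_path_cost_le by (intro sum_mono mult_left_mono) (auto simp: feasible_def)
  finally show ?thesis .
qed

lemma wardrop_od_cost:
  assumes W: "wardrop_eq ce I P m f" and i: "i \<in> I"
  shows "(\<Sum>p\<in>P i. f p * path_cost ce I P f p) = m i * Min (path_cost ce I P f ` P i)"
proof -
  let ?pc = "path_cost ce I P f"
  obtain p0 where p0: "p0 \<in> P i" "?pc p0 = Min (?pc ` P i)"
    using Min_in[of "?pc ` P i"] finite_paths[OF i] paths_nonempty[OF i] by fastforce
  have "f p * ?pc p = f p * Min (?pc ` P i)" if p: "p \<in> P i" for p
  proof (cases "0 < f p")
    case True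
    then have "?pc p \<le> ?pc p0" using W i p p0(1) unfolding wardrop_eq_def by blast
    then show ?thesis using min_path_cost_le[OF i p, of f] p0 by simp
  next
    case False
    moreover have "0 \<le> f p" using W i p by (auto simp: wardrop_eq_def feasible_def)
    ultimately have "f p = 0" by simp
    then show ?thesis by simp
  qed
  then have "(\<Sum>p\<in>P i. f p * ?pc p) = (\<Sum>p\<in>P i. f p) * Min (?pc ` P i)"
    unfolding sum_distrib_right by (rule sum.cong[OF refl])
  then show ?thesis using W i by (simp add: wardrop_eq_def feasible_def)
qed

lemma wardrop_social_cost_eq:
  "wardrop_eq ce I P m f \<Longrightarrow> SC f = (\<Sum>i\<in>I. m i * Min (path_cost ce I P f ` P i))"
  by (simp add: social_cost_eq_sum_paths sum_all_paths wardrop_od_cost)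

lemma wardrop_variational_inequality:
  assumes W: "wardrop_eq ce I P m f" and y: "feasible I P m y"
  shows "SC f \<le> (\<Sum>e\<in>E. load I P y e * ce e (load I P f e))"
proof -
  have "SC f \<le> (\<Sum>i\<in>I. \<Sum>p\<in>P i. y p * path_cost ce I P f p)"
    unfolding wardrop_social_cost_eq[OF W] using od_cost_ge_min[OF y] by (rule sum_mono)
  also have "\<dots> = (\<Sum>e\<in>E. load I P y e * ce e (load I P f e))"
    by (simp add: sum_all_paths[symmetric] sum_load_mult path_cost_def)
  finally show ?thesis .
qed

lemma wardrop_social_cost_le:
  assumes W: "wardrop_eq ce I P m f" and q: "\<And>i. i \<in> I \<Longrightarrow> q i \<in> P i"
  shows "SC f \<le> (\<Sum>i\<in>I. m i * path_cost ce I P f (q i))"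
  unfolding wardrop_social_cost_eq[OF W]
  using W q min_path_cost_le demand_nonneg by (intro sum_mono mult_left_mono) (auto simp: wardrop_eq_def)

lemma
  assumes "feasible I P m g"
  shows opt_le_social_cost: "opt E ce I P m \<le> SC g"
    and le_opt: "(\<And>y. feasible I P m y \<Longrightarrow> b \<le> SC y) \<Longrightarrow> b \<le> opt E ce I P m"
    and exists_near_optimal: "0 < \<epsilon> \<Longrightarrow> \<exists>y. feasible I P m y \<and> SC y < opt E ce I P m + \<epsilon>"
proof -
  let ?S = "{SC y | y. feasible I P m y}"
  have S: "?S \<noteq> {}" "bdd_below ?S"
    using assms social_cost_nonneg unfolding bdd_below_def by blast+
  show "opt E ce I P m \<le> SC g" unfolding opt_def using assms S by (intro cInf_lower) auto
  show "b \<le> opt E ce I P m" if "\<And>y. feasible I P m y \<Longrightarrow> b \<le> SC y"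
    unfolding opt_def using that S by (intro cInf_greatest) auto
  show "\<exists>y. feasible I P m y \<and> SC y < opt E ce I P m + \<epsilon>" if "0 < \<epsilon>"
    using cInf_lessD[OF S(1), of "opt E ce I P m + \<epsilon>"] that by (auto simp: opt_def)
qed

lemma feasible_heavy_path:
  assumes g: "feasible I P m g" and i: "i \<in> I"
  shows "\<exists>p\<in>P i. m i / card (P i) \<le> g p"
proof (rule ccontr)
  assume "\<not> ?thesis"
  then have "(\<Sum>p\<in>P i. g p) < (\<Sum>p\<in>P i. m i / card (P i))"
    using finite_paths[OF i] paths_nonempty[OF i] by (intro sum_strict_mono) auto
  then show False using g i finite_paths[OF i] paths_nonempty[OF i] by (simp add: feasible_def)
qed

lemma social_cost_ge_blocking_edges:
  assumes g: "feasible I P m g" and i: "i \<in> I"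
    and H: "H \<subseteq> E" "\<forall>p\<in>P i. \<exists>e\<in>set p. e \<in> H"
    and cost: "\<And>e. e \<in> H \<Longrightarrow> \<beta> \<le> ce e (m i / card (P i))" and \<beta>: "0 \<le> \<beta>"
  shows "m i / card (P i) * \<beta> \<le> SC g"
proof -
  obtain p where p: "p \<in> P i" "m i / card (P i) \<le> g p" using feasible_heavy_path[OF g i] by blast
  obtain e where e: "e \<in> set p" "e \<in> H" using H(2) p(1) by blast
  have eE: "e \<in> E" using H(1) e(2) by blast
  have load: "m i / card (P i) \<le> load I P g e" using flow_le_load[OF g _ e(1)] p i by fastforce
  have "0 \<le> m i / card (P i)" using demand_nonneg[OF g i] by simp
  have "m i / card (P i) * \<beta> \<le> m i / card (P i) * ce e (m i / card (P i))"
    using cost[OF e(2)] \<open>0 \<le> m i / card (P i)\<close> by (rule mult_left_mono)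
  also have "\<dots> \<le> SC g" using social_cost_ge_heavy_edge[OF g eE _ load] \<open>0 \<le> m i / card (P i)\<close> .
  finally show ?thesis .
qed

definition reroute :: "('i \<Rightarrow> 'e list) \<Rightarrow> ('e list \<Rightarrow> bool) \<Rightarrow> ('e list \<Rightarrow> real) \<Rightarrow> 'e list \<Rightarrow> real" where
  "reroute q bad y p = (if bad p then 0 else y p) +
     (\<Sum>i\<in>I. if p = q i then (\<Sum>p'\<in>{p'\<in>P i. bad p'}. y p') else 0)"

context
  fixes q :: "'i \<Rightarrow> 'e list" and bad :: "'e list \<Rightarrow> bool"
  assumes q: "\<And>i. i \<in> I \<Longrightarrow> q i \<in> P i" "\<And>i. i \<in> I \<Longrightarrow> \<not> bad (q i)"
begin

lemma reroute_on_paths: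
  assumes j: "j \<in> I" "p \<in> P j"
  shows "reroute q bad y p = (if bad p then 0 else y p) + (if p = q j then (\<Sum>p'\<in>{p'\<in>P j. bad p'}. y p') else 0)"
proof -
  have "p \<noteq> q i" if "i \<in> I" "i \<noteq> j" for i
    using q(1)[OF that(1)] disjoint_paths j that unfolding disjoint_family_on_def by blast
  then have "(\<Sum>i\<in>I. if p = q i then (\<Sum>p'\<in>{p'\<in>P i. bad p'}. y p') else 0)
      = (\<Sum>i\<in>I. if i = j then (if p = q i then (\<Sum>p'\<in>{p'\<in>P i. bad p'}. y p') else 0) else 0)"
    by (intro sum.cong) auto
  then show ?thesis using j finite_od_pairs by (simp add: reroute_def)
qed

lemma reroute_bad: "p \<in> all_paths \<Longrightarrow> bad p \<Longrightarrow> reroute q bad y p = 0"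
  using reroute_on_paths q(2) by fastforce

lemma feasible_reroute:
  assumes y: "feasible I P m y"
  shows "feasible I P m (reroute q bad y)"
  unfolding feasible_def
proof (intro conjI ballI)
  have nonneg: "0 \<le> y p" if "i \<in> I" "p \<in> P i" for i p using y that by (auto simp: feasible_def)
  show "0 \<le> reroute q bad y p" if "p \<in> all_paths" for p
    unfolding reroute_def using nonneg that by (auto intro!: add_nonneg_nonneg sum_nonneg)
next
  fix j assume j: "j \<in> I"
  have "(\<Sum>p\<in>P j. reroute q bad y p)
      = (\<Sum>p\<in>P j. if bad p then 0 else y p) + (\<Sum>p\<in>{p\<in>P j. bad p}. y p)"
    using reroute_on_paths[OF j] q(1)[OF j] finite_paths[OF j]
    by (simp add: sum.distrib sum.delta' cong: sum.cong)
  also have "\<dots> = (\<Sum>p\<in>P j. (if bad p then 0 else y p) + (if bad p then y p else 0))"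
    using finite_paths[OF j] by (simp add: sum.inter_filter sum.distrib)
  also have "\<dots> = (\<Sum>p\<in>P j. y p)" by (rule sum.cong) auto
  also have "\<dots> = m j" using y j by (simp add: feasible_def)
  finally show "(\<Sum>p\<in>P j. reroute q bad y p) = m j" .
qed

lemma load_reroute_le:
  assumes y: "feasible I P m y"
  shows "load I P (reroute q bad y) e \<le> load I P y e + (\<Sum>p\<in>{p\<in>all_paths. bad p}. y p)"
proof -
  have "(\<Sum>p\<in>all_paths. if p = q i then (\<Sum>p'\<in>{p'\<in>P i. bad p'}. y p') else 0)
      = (\<Sum>p'\<in>{p'\<in>P i. bad p'}. y p')" if "i \<in> I" for i
    using q(1)[OF that] that finite_all_paths by (subst sum.delta) auto
  then have "(\<Sum>p\<in>all_paths. \<Sum>i\<in>I. if p = q i then (\<Sum>p'\<in>{p'\<in>P i. bad p'}. y p') else 0)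
      = (\<Sum>i\<in>I. \<Sum>p'\<in>{p'\<in>P i. bad p'}. y p')"
    by (subst sum.swap) (rule sum.cong, auto)
  also have "\<dots> = (\<Sum>p\<in>{p\<in>all_paths. bad p}. y p)"
    using finite_od_pairs finite_paths disjoint_paths
    by (subst sum.UNION_disjoint[symmetric]) (auto simp: disjoint_family_on_def intro!: sum.cong)
  finally have moved: "(\<Sum>p\<in>all_paths. reroute q bad y p - (if bad p then 0 else y p))
      = (\<Sum>p\<in>{p\<in>all_paths. bad p}. y p)" by (simp add: reroute_def)
  have "load I P (reroute q bad y) e
      \<le> (\<Sum>p\<in>all_paths. (if e \<in> set p then y p else 0) + (reroute q bad y p - (if bad p then 0 else y p)))"
    unfolding load_eq_sum_if using y
    by (intro sum_mono) (auto simp: feasible_def reroute_def intro!: sum_nonneg)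
  then show ?thesis by (simp add: sum.distrib load_eq_sum_if moved)
qed

end

lemma tight_alpha_upper_path:
  assumes "i \<in> I"
  shows "\<exists>p\<in>P i. \<forall>e\<in>set p. \<alpha> e \<le> tight_alpha I P \<alpha>"
proof -
  obtain p where p: "p \<in> P i" "Max (\<alpha> ` set p) = Min ((\<lambda>p. Max (\<alpha> ` set p)) ` P i)"
    using Min_in[of "(\<lambda>p. Max (\<alpha> ` set p)) ` P i"] finite_paths[OF assms] paths_nonempty[OF assms]
    by fastforce
  have "\<alpha> e \<le> tight_alpha I P \<alpha>" if "e \<in> set p" for e
  proof -
    have "\<alpha> e \<le> Max (\<alpha> ` set p)" using that by simp
    also have "\<dots> \<le> tight_alpha I P \<alpha>"
      unfolding tight_alpha_def p(2) using assms finite_od_pairs by simp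
    finally show ?thesis .
  qed
  then show ?thesis using p(1) by blast
qed

lemma tight_alpha_blocking_od_pair:
  assumes "I \<noteq> {}"
  shows "\<exists>i\<in>I. \<forall>p\<in>P i. \<exists>e\<in>set p. tight_alpha I P \<alpha> \<le> \<alpha> e"
proof -
  obtain i where i: "i \<in> I" "tight_alpha I P \<alpha> = Min ((\<lambda>p. Max (\<alpha> ` set p)) ` P i)"
    using Max_in[of "(\<lambda>i. Min ((\<lambda>p. Max (\<alpha> ` set p)) ` P i)) ` I"] finite_od_pairs assms
    unfolding tight_alpha_def by fastforce
  have "\<exists>e\<in>set p. tight_alpha I P \<alpha> \<le> \<alpha> e" if p: "p \<in> P i" for p
  proof -
    obtain e where "e \<in> set p" "\<alpha> e = Max (\<alpha> ` set p)"
      using Max_in[of "\<alpha> ` set p"] path_nonempty[OF i(1) p] by fastforce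
    moreover have "tight_alpha I P \<alpha> \<le> Max (\<alpha> ` set p)" using i finite_paths p by simp
    ultimately show ?thesis by metis
  qed
  then show ?thesis using i(1) by blast
qed

end

section \<open>Games with demands proportional to a total inflow\<close>

locale scaled_game = network E I P ce + regular_variation c F
  for E :: "'e set" and I :: "'i set" and P :: "'i \<Rightarrow> 'e list set"
    and ce :: "'e \<Rightarrow> real \<Rightarrow> real" and c :: "real \<Rightarrow> real" and F :: "real filter" +
  fixes lam :: "'i \<Rightarrow> real" and \<alpha> :: "'e \<Rightarrow> ereal" and f :: "real \<Rightarrow> 'e list \<Rightarrow> real"
  assumes lam_pos: "\<And>i. i \<in> I \<Longrightarrow> 0 < lam i" and lam_sum: "(\<Sum>i\<in>I. lam i) = 1"
    and benchmark: "\<And>e. e \<in> E \<Longrightarrow> ((\<lambda>x. ereal (ce e x / c x)) \<longlongrightarrow> \<alpha> e) F"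
    and tight: "0 < tight_alpha I P \<alpha>" "tight_alpha I P \<alpha> < \<infinity>"
    and equilibrium: "\<And>M. 0 < M \<Longrightarrow> wardrop_eq ce I P (\<lambda>i. lam i * M) (f M)"
begin

abbreviation demand :: "real \<Rightarrow> 'i \<Rightarrow> real" where
  "demand M \<equiv> \<lambda>i. lam i * M"

abbreviation Opt :: "real \<Rightarrow> real" where
  "Opt M \<equiv> opt E ce I P (demand M)"

abbreviation alpha_real :: "'e \<Rightarrow> real" where
  "alpha_real e \<equiv> real_of_ereal (\<alpha> e)"

lemma od_pairs_nonempty: "I \<noteq> {}"
  using lam_sum by auto

lemma feasible_equilibrium: "0 < M \<Longrightarrow> feasible I P (demand M) (f M)"
  using equilibrium by (simp add: wardrop_eq_def)

lemma load_le_inflow: "feasible I P (demand M) g \<Longrightarrow> load I P g e \<le> M"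
  using load_le_total_demand[of "demand M" g e] lam_sum by (simp flip: sum_distrib_right)

lemma alpha_nonneg:
  assumes e: "e \<in> E" shows "0 \<le> \<alpha> e"
proof -
  have "eventually (\<lambda>x. 0 \<le> ereal (ce e x / c x)) F"
    using eventually_pos by (rule eventually_mono) (use e c_pos cost_nonneg in \<open>simp add: less_imp_le\<close>)
  then show ?thesis using tendsto_lowerbound[OF benchmark[OF e] _ nontrivial] by simp
qed

definition finite_alpha_edges :: "'e set" where
  "finite_alpha_edges = {e\<in>E. \<alpha> e \<noteq> \<infinity>}"

definition infinite_alpha_edges :: "'e set" where
  "infinite_alpha_edges = {e\<in>E. \<alpha> e = \<infinity>}"

lemma finite_alpha_edges_finite: "finite finite_alpha_edges"
  using finite_edges by (simp add: finite_alpha_edges_def)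

lemma finite_alpha_edgesD:
  assumes "e \<in> finite_alpha_edges"
  shows "e \<in> E" "\<alpha> e = ereal (alpha_real e)" "0 \<le> alpha_real e"
  using assms alpha_nonneg[of e] by (cases "\<alpha> e"; simp add: finite_alpha_edges_def)+

lemma tendsto_finite_alpha:
  assumes "e \<in> finite_alpha_edges"
  shows "((\<lambda>x. ce e x / c x) \<longlongrightarrow> alpha_real e) F"
proof -
  have "((\<lambda>x. ereal (ce e x / c x)) \<longlongrightarrow> ereal (alpha_real e)) F"
    using benchmark finite_alpha_edgesD[OF assms] by simp
  then show ?thesis by (simp only: lim_ereal)
qed

definition tight_value :: real where
  "tight_value = real_of_ereal (tight_alpha I P \<alpha>)"

lemma tight_value: "tight_alpha I P \<alpha> = ereal tight_value" "0 < tight_value"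
  using tight by (cases "tight_alpha I P \<alpha>"; simp add: tight_value_def)+

definition good_path :: "'i \<Rightarrow> 'e list" where
  "good_path i = (SOME p. p \<in> P i \<and> (\<forall>e\<in>set p. \<alpha> e \<le> tight_alpha I P \<alpha>))"

lemma good_path: "i \<in> I \<Longrightarrow> good_path i \<in> P i" "i \<in> I \<Longrightarrow> e \<in> set (good_path i) \<Longrightarrow> \<alpha> e < \<infinity>"
proof -
  assume i: "i \<in> I"
  have "good_path i \<in> P i \<and> (\<forall>e\<in>set (good_path i). \<alpha> e \<le> tight_alpha I P \<alpha>)"
    unfolding good_path_def by (rule someI_ex) (use tight_alpha_upper_path[OF i] in blast)
  then show "good_path i \<in> P i" "e \<in> set (good_path i) \<Longrightarrow> \<alpha> e < \<infinity>"
    using tight(2) by auto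
qed

lemma good_path_finite_alpha: "i \<in> I \<Longrightarrow> set (good_path i) \<subseteq> finite_alpha_edges"
  using good_path path_edges by (fastforce simp: finite_alpha_edges_def)

lemma rv_index_nonneg: "0 \<le> rv_index"
proof -
  obtain i where i: "i \<in> I" "\<forall>p\<in>P i. \<exists>e\<in>set p. tight_alpha I P \<alpha> \<le> \<alpha> e"
    using tight_alpha_blocking_od_pair od_pairs_nonempty by blast
  obtain p where p: "p \<in> P i" "\<forall>e\<in>set p. \<alpha> e \<le> tight_alpha I P \<alpha>"
    using tight_alpha_upper_path[OF i(1)] by blast
  obtain e where e: "e \<in> set p" "tight_alpha I P \<alpha> \<le> \<alpha> e" using i(2) p(1) by blast
  have "\<alpha> e = ereal tight_value" using e p tight_value(1) by (simp add: antisym)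
  then have eF: "e \<in> finite_alpha_edges"
    using e path_edges[OF i(1) p(1)] by (auto simp: finite_alpha_edges_def)
  have lim: "((\<lambda>M. ce e (M * u) / c M) \<longlongrightarrow> tight_value * rv_limit u) F" if "0 < u" for u
    using \<open>\<alpha> e = ereal tight_value\<close> tendsto_scaled_ratio[OF tendsto_finite_alpha[OF eF] that] by simp
  have "eventually (\<lambda>M. ce e (M * (1/2)) / c M \<le> ce e (M * 1) / c M) F"
    using eventually_pos
    by (rule eventually_mono) (use eF c_pos[THEN less_imp_le] in \<open>auto intro!: divide_right_mono cost_monoD simp: finite_alpha_edges_def\<close>)
  from tendsto_le[OF nontrivial lim lim this]
  have "tight_value * rv_limit (1/2) \<le> tight_value * rv_limit 1" by simp
  then have "rv_limit (1/2) \<le> 1" using tight_value(2) by (simp add: rv_limit_1)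
  then show ?thesis using rv_limit_pos[of "1/2"] by (simp add: rv_index_def)
qed

lemma eventually_cost_le:
  assumes "e \<in> finite_alpha_edges"
  shows "eventually (\<lambda>M. ce e M \<le> (alpha_real e + 1) * c M) F"
proof -
  have "eventually (\<lambda>M. ce e M / c M < alpha_real e + 1) F"
    using order_tendstoD(2)[OF tendsto_finite_alpha[OF assms]] by simp
  with eventually_pos show ?thesis
    by (rule eventually_elim2) (use c_pos in \<open>simp add: divide_less_eq less_imp_le\<close>)
qed

lemma eventually_cost_ge:
  assumes e: "e \<in> E" and b: "ereal b < \<alpha> e" "0 \<le> b" and \<theta>: "0 < \<theta>"
  shows "eventually (\<lambda>M. b * (rv_limit \<theta> / 2) * c M \<le> ce e (M * \<theta>)) F"
proof -
  have "eventually (\<lambda>M. ereal b < ereal (ce e (M * \<theta>) / c (M * \<theta>))) F"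
    using order_tendstoD(1)[OF filterlim_compose[OF benchmark[OF e] filterlim_scale[OF \<theta>]] b(1)] .
  moreover have "eventually (\<lambda>M. rv_limit \<theta> / 2 < c (M * \<theta>) / c M) F"
    using rv_limit_pos[OF \<theta>] by (intro order_tendstoD(1)[OF tendsto_rv_limit[OF \<theta>]]) simp
  ultimately show ?thesis using eventually_pos
  proof eventually_elim
    case (elim M)
    then have "b * c (M * \<theta>) \<le> ce e (M * \<theta>)" "rv_limit \<theta> / 2 * c M \<le> c (M * \<theta>)"
      using c_pos \<theta> by (simp_all add: less_divide_eq)
    then show ?case using b(2) by (smt (verit) mult.assoc mult_left_mono)
  qed
qed

lemma eventually_social_cost_lower:
  obtains \<kappa> where "0 < \<kappa>"
    "eventually (\<lambda>M. \<forall>g. feasible I P (demand M) g \<longrightarrow> \<kappa> * M * c M \<le> SC g) F"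
proof -
  obtain i where i: "i \<in> I" "\<forall>p\<in>P i. \<exists>e\<in>set p. ereal tight_value \<le> \<alpha> e"
    using tight_alpha_blocking_od_pair od_pairs_nonempty tight_value(1) by metis
  define \<theta> where "\<theta> = lam i / card (P i)"
  have \<theta>: "0 < \<theta>" using lam_pos[OF i(1)] finite_paths[OF i(1)] paths_nonempty[OF i(1)]
    by (simp add: \<theta>_def card_gt_0_iff)
  define \<beta> where "\<beta> = tight_value/2 * (rv_limit \<theta> / 2)"
  have \<beta>: "0 < \<beta>" using tight_value(2) rv_limit_pos[OF \<theta>] by (simp add: \<beta>_def)
  define H where "H = {e\<in>E. ereal tight_value \<le> \<alpha> e}"
  have "eventually (\<lambda>M. \<beta> * c M \<le> ce e (M * \<theta>)) F" if "e \<in> H" for e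
    using that tight_value(2) \<theta> unfolding \<beta>_def H_def
    by (intro eventually_cost_ge) (auto intro: order.strict_trans2[of _ "ereal tight_value"])
  then have "eventually (\<lambda>M. 0 < M \<and> (\<forall>e\<in>H. \<beta> * c M \<le> ce e (M * \<theta>))) F"
    using finite_edges by (intro eventually_conj eventually_pos eventually_ball_finite) (auto simp: H_def)
  then have "eventually (\<lambda>M. \<forall>g. feasible I P (demand M) g \<longrightarrow> \<theta> * \<beta> * M * c M \<le> SC g) F"
  proof (rule eventually_mono, safe)
    fix M g assume M: "0 < M" and cost: "\<forall>e\<in>H. \<beta> * c M \<le> ce e (M * \<theta>)"
      and g: "feasible I P (demand M) g"
    have "lam i * M / card (P i) = M * \<theta>" by (simp add: \<theta>_def)
    moreover have "\<forall>p\<in>P i. \<exists>e\<in>set p. e \<in> H" using i(2) path_edges[OF i(1)] unfolding H_def by blast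
    ultimately have "lam i * M / card (P i) * (\<beta> * c M) \<le> SC g"
      using cost \<beta> c_pos[OF M]
      by (intro social_cost_ge_blocking_edges[OF g i(1), of H]) (auto simp: H_def)
    then show "\<theta> * \<beta> * M * c M \<le> SC g" by (simp add: \<theta>_def algebra_simps)
  qed
  then show ?thesis using \<theta> \<beta> by (intro that[of "\<theta> * \<beta>"]) auto
qed

lemma eventually_equilibrium_cost_upper:
  obtains K where "eventually (\<lambda>M. SC (f M) \<le> K * M * c M) F"
proof -
  define K where "K = (\<Sum>e\<in>finite_alpha_edges. alpha_real e + 1)"
  have "eventually (\<lambda>M. 0 < M \<and> (\<forall>e\<in>finite_alpha_edges. ce e M \<le> (alpha_real e + 1) * c M)) F"
    using finite_alpha_edges_finite eventually_cost_le
    by (intro eventually_conj eventually_pos eventually_ball_finite) auto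
  then have "eventually (\<lambda>M. SC (f M) \<le> K * M * c M) F"
  proof (rule eventually_mono, elim conjE)
    fix M assume M: "0 < M" and cost: "\<forall>e\<in>finite_alpha_edges. ce e M \<le> (alpha_real e + 1) * c M"
    have "path_cost ce I P (f M) (good_path i) \<le> K * c M" if i: "i \<in> I" for i
    proof -
      have "path_cost ce I P (f M) (good_path i) \<le> (\<Sum>e\<in>set (good_path i). ce e M)"
        unfolding path_cost_def using good_path_finite_alpha[OF i] feasible_equilibrium[OF M]
        by (intro sum_mono cost_monoD load_nonneg load_le_inflow) (auto simp: finite_alpha_edges_def)
      also have "\<dots> \<le> (\<Sum>e\<in>finite_alpha_edges. ce e M)"
        using good_path_finite_alpha[OF i] finite_alpha_edges_finite M
        by (intro sum_mono2 cost_nonneg) (auto simp: finite_alpha_edges_def)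
      also have "\<dots> \<le> K * c M" unfolding K_def sum_distrib_right using cost by (intro sum_mono) auto
      finally show ?thesis .
    qed
    then have "SC (f M) \<le> (\<Sum>i\<in>I. lam i * M * (K * c M))"
      using wardrop_social_cost_le[OF equilibrium[OF M] good_path(1)] lam_pos M
      by (smt (verit) mult_left_mono sum_mono zero_le_mult_iff)
    also have "\<dots> = K * M * c M" using lam_sum by (simp flip: sum_distrib_right)
    finally show "SC (f M) \<le> K * M * c M" .
  qed
  then show ?thesis by (rule that)
qed

definition edgewise_power_law :: "real \<Rightarrow> real \<Rightarrow> real \<Rightarrow> bool" where
  "edgewise_power_law \<eta> \<delta> M \<longleftrightarrow> (\<forall>e\<in>finite_alpha_edges. ce e M \<le> (alpha_real e + 1) * c M \<and>
     near_power_law (ce e) (alpha_real e) rv_index \<eta> \<delta> M (c M))"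

lemma eventually_edgewise_power_law:
  assumes "0 < \<delta>" "0 < \<eta>"
  shows "eventually (\<lambda>M. edgewise_power_law \<eta> \<delta> M) F"
  unfolding edgewise_power_law_def using finite_alpha_edges_finite
proof (rule eventually_ball_finite, intro ballI eventually_conj)
  fix e assume e: "e \<in> finite_alpha_edges"
  show "eventually (\<lambda>M. ce e M \<le> (alpha_real e + 1) * c M) F"
    by (rule eventually_cost_le[OF e])
  show "eventually (\<lambda>M. near_power_law (ce e) (alpha_real e) rv_index \<eta> \<delta> M (c M)) F"
    using e assms cost_mono finite_alpha_edgesD[OF e]
    by (intro eventually_near_power_law tendsto_finite_alpha rv_index_nonneg) auto
qed

definition alpha_bound :: real where
  "alpha_bound = (\<Sum>e\<in>finite_alpha_edges. alpha_real e)"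

lemma alpha_bound: "e \<in> finite_alpha_edges \<Longrightarrow> alpha_real e \<le> alpha_bound" "0 \<le> alpha_bound"
  unfolding alpha_bound_def using finite_alpha_edges_finite finite_alpha_edgesD
  by (auto intro!: member_le_sum sum_nonneg)

definition edge_error :: "real \<Rightarrow> real \<Rightarrow> real \<Rightarrow> real" where
  "edge_error \<eta> \<delta> \<theta> = (\<theta> + \<eta>) * (alpha_bound + 1) + alpha_bound * ((1 + \<theta>/\<eta>) powr rv_index - 1) + 2 * \<delta>"

lemma growth_factor_ge: "0 < \<eta> \<Longrightarrow> 0 \<le> \<theta> \<Longrightarrow> 0 \<le> (1 + \<theta>/\<eta>) powr rv_index - 1"
  using ge_one_powr_ge_zero[of "1 + \<theta>/\<eta>" rv_index] rv_index_nonneg by simp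

lemma edge_error_ge: "0 < \<eta> \<Longrightarrow> 0 \<le> \<theta> \<Longrightarrow> \<eta> * (alpha_bound + 1) + 2 * \<delta> \<le> edge_error \<eta> \<delta> \<theta>"
  using growth_factor_ge[of \<eta> \<theta>] alpha_bound(2) unfolding edge_error_def
  by (simp add: distrib_right)

lemma edge_error_nonneg: "0 < \<eta> \<Longrightarrow> 0 \<le> \<theta> \<Longrightarrow> 0 \<le> \<delta> \<Longrightarrow> 0 \<le> edge_error \<eta> \<delta> \<theta>"
  using edge_error_ge[of \<eta> \<theta> \<delta>] alpha_bound(2) by (smt (verit) mult_nonneg_nonneg)

lemma exists_edge_parameters:
  assumes \<epsilon>: "0 < \<epsilon>"
  obtains \<eta> \<delta> \<theta> where "0 < \<eta>" "0 < \<delta>" "0 < \<theta>" "(rv_index + 1) * (card E * edge_error \<eta> \<delta> \<theta>) \<le> \<epsilon>"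
proof -
  define b where "b = \<epsilon> / ((rv_index + 1) * (card E + 1))"
  have D: "0 < (rv_index + 1) * (card E + 1)" using rv_index_nonneg by simp
  then have b: "0 < b" "(rv_index + 1) * ((card E + 1) * b) = \<epsilon>" using \<epsilon> rv_index_nonneg by (simp_all add: b_def)
  define \<eta> where "\<eta> = b / (4 * (alpha_bound + 1))"
  have \<eta>: "0 < \<eta>" "\<eta> * (alpha_bound + 1) = b/4"
    using b alpha_bound(2) unfolding \<eta>_def by (auto simp: field_simps add_nonneg_eq_0_iff)
  obtain \<theta> where \<theta>: "0 < \<theta>"
    "\<theta> * (alpha_bound + 1) + alpha_bound * ((1 + \<theta>/\<eta>) powr rv_index - 1) \<le> b/4"
    using exists_continuity_radius[OF \<eta>(1) _ alpha_bound(2), of "b/4"] b by auto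
  have "edge_error \<eta> (b/8) \<theta> \<le> b"
    unfolding edge_error_def distrib_right using \<theta>(2) \<eta>(2) b(1) by linarith
  then have "(rv_index + 1) * (card E * edge_error \<eta> (b/8) \<theta>) \<le> (rv_index + 1) * ((card E + 1) * b)"
    using edge_error_nonneg[of \<eta> \<theta> "b/8"] \<eta> \<theta> b rv_index_nonneg by (intro mult_left_mono mult_mono) auto
  then show ?thesis using that[of \<eta> "b/8" \<theta>] \<eta>(1) \<theta>(1) b by simp
qed

lemma edge_smoothness:
  assumes edges: "edgewise_power_law \<eta> \<delta> M" and M: "0 < M" and \<eta>: "0 < \<eta>" and \<delta>: "0 \<le> \<delta>" and \<theta>: "0 \<le> \<theta>"
    and e: "e \<in> finite_alpha_edges" and xy: "0 \<le> x" "x \<le> M" "0 \<le> y" "y \<le> M"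
  shows "y * ce e x \<le> 1/(rv_index+1) * (y * ce e y) + rv_index/(rv_index+1) * (x * ce e x)
           + edge_error \<eta> \<delta> \<theta> * M * c M"
proof -
  have eE: "e \<in> E" using finite_alpha_edgesD[OF e] by simp
  have "y * ce e x \<le> 1/(rv_index+1) * (y * ce e y) + rv_index/(rv_index+1) * (x * ce e x)
        + (\<eta> * (alpha_real e + 1) + 2 * \<delta>) * M * c M"
    using edges e M c_pos \<eta> \<delta> xy cost_mono[OF eE] cost_nonneg[OF eE] finite_alpha_edgesD[OF e]
    by (intro near_power_law_smoothness rv_index_nonneg) (auto simp: edgewise_power_law_def)
  also have "(\<eta> * (alpha_real e + 1) + 2 * \<delta>) * M * c M \<le> edge_error \<eta> \<delta> \<theta> * M * c M"
  proof -
    have "\<eta> * (alpha_real e + 1) \<le> \<eta> * (alpha_bound + 1)" using alpha_bound(1)[OF e] \<eta> by simp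
    then show ?thesis using edge_error_ge[OF \<eta> \<theta>, of \<delta>] M c_pos[OF M]
      by (intro mult_right_mono) auto
  qed
  finally show ?thesis by simp
qed

lemma edge_continuity:
  assumes edges: "edgewise_power_law \<eta> \<delta> M" and M: "0 < M" and \<eta>: "0 < \<eta>" and \<delta>: "0 \<le> \<delta>" and \<theta>: "0 \<le> \<theta>"
    and e: "e \<in> finite_alpha_edges" and x: "0 \<le> x" "x \<le> M" "0 \<le> x'" "x' \<le> M" "x' \<le> x + \<theta> * M"
  shows "x' * ce e x' \<le> x * ce e x + edge_error \<eta> \<delta> \<theta> * M * c M"
proof -
  define W where "W = (1 + \<theta>/\<eta>) powr rv_index - 1"
  have W: "0 \<le> W" unfolding W_def using growth_factor_ge[OF \<eta> \<theta>] .
  have eE: "e \<in> E" and a: "0 \<le> alpha_real e" "alpha_real e \<le> alpha_bound"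
    using finite_alpha_edgesD[OF e] alpha_bound(1)[OF e] by auto
  have "x' * ce e x' \<le> x * ce e x + ((\<theta> + \<eta>) * (alpha_real e + 1) + alpha_real e * W + 2 * \<delta>) * M * c M"
    unfolding W_def using edges e M c_pos \<eta> \<delta> \<theta> x a cost_mono[OF eE] cost_nonneg[OF eE]
    by (intro near_power_law_continuity rv_index_nonneg) (auto simp: edgewise_power_law_def)
  also have "((\<theta> + \<eta>) * (alpha_real e + 1) + alpha_real e * W + 2 * \<delta>) * M * c M \<le> edge_error \<eta> \<delta> \<theta> * M * c M"
  proof -
    have "(\<theta> + \<eta>) * (alpha_real e + 1) \<le> (\<theta> + \<eta>) * (alpha_bound + 1)" "alpha_real e * W \<le> alpha_bound * W"
      using a \<theta> \<eta> W by (auto intro: mult_left_mono mult_right_mono)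
    then show ?thesis using M c_pos[OF M] unfolding edge_error_def W_def[symmetric]
      by (intro mult_right_mono) auto
  qed
  finally show ?thesis by simp
qed

lemma edges_split: "e \<in> E \<Longrightarrow> e \<notin> infinite_alpha_edges \<Longrightarrow> e \<in> finite_alpha_edges"
  by (simp add: finite_alpha_edges_def infinite_alpha_edges_def)

lemma social_cost_le_nearby_flow:
  assumes edges: "edgewise_power_law \<eta> \<delta> M" and M: "0 < M" and \<eta>: "0 < \<eta>" and \<delta>: "0 \<le> \<delta>" and \<theta>: "0 \<le> \<theta>"
    and y0: "feasible I P (demand M) y0" and y: "feasible I P (demand M) y"
    and close: "\<And>e. load I P y e \<le> load I P y0 e + \<theta> * M"
    and avoid: "\<And>e. e \<in> infinite_alpha_edges \<Longrightarrow> load I P y e = 0"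
  shows "SC y \<le> SC y0 + card E * edge_error \<eta> \<delta> \<theta> * M * c M"
proof -
  have err: "0 \<le> edge_error \<eta> \<delta> \<theta> * M * c M"
    using edge_error_nonneg[OF \<eta> \<theta> \<delta>] M c_pos[OF M] by simp
  have "SC y \<le> (\<Sum>e\<in>E. load I P y0 e * ce e (load I P y0 e) + edge_error \<eta> \<delta> \<theta> * M * c M)"
    unfolding social_cost_def
  proof (rule sum_mono)
    fix e assume e: "e \<in> E"
    show "load I P y e * ce e (load I P y e) \<le> load I P y0 e * ce e (load I P y0 e) + edge_error \<eta> \<delta> \<theta> * M * c M"
    proof (cases "e \<in> infinite_alpha_edges")
      case True
      then show ?thesis using avoid err load_nonneg[OF y0] cost_nonneg[OF e] by simp
    next
      case False
      then show ?thesis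
        using edge_continuity[OF edges M \<eta> \<delta> \<theta> edges_split[OF e False]] close[of e]
          load_nonneg[OF y0, of e] load_nonneg[OF y, of e] load_le_inflow[OF y0, of e] load_le_inflow[OF y, of e]
        by simp
    qed
  qed
  then show ?thesis by (simp add: social_cost_def sum.distrib mult.assoc)
qed

lemma equilibrium_cost_le_avoiding_flow:
  assumes edges: "edgewise_power_law \<eta> \<delta> M" and M: "0 < M" and \<eta>: "0 < \<eta>" and \<delta>: "0 \<le> \<delta>" and \<theta>: "0 \<le> \<theta>"
    and y: "feasible I P (demand M) y" and avoid: "\<And>e. e \<in> infinite_alpha_edges \<Longrightarrow> load I P y e = 0"
  shows "SC (f M) \<le> SC y + (rv_index + 1) * (card E * edge_error \<eta> \<delta> \<theta> * M * c M)"
proof -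
  define \<rho> where "\<rho> = rv_index"
  have \<rho>: "0 \<le> \<rho>" using rv_index_nonneg by (simp add: \<rho>_def)
  define err where "err = edge_error \<eta> \<delta> \<theta> * M * c M"
  have err: "0 \<le> err" using edge_error_nonneg[OF \<eta> \<theta> \<delta>] M c_pos[OF M] by (simp add: err_def)
  let ?x = "load I P (f M)" and ?y = "load I P y"
  have f: "feasible I P (demand M) (f M)" by (rule feasible_equilibrium[OF M])
  have "SC (f M) \<le> (\<Sum>e\<in>E. ?y e * ce e (?x e))"
    by (rule wardrop_variational_inequality[OF equilibrium[OF M] y])
  also have "\<dots> \<le> (\<Sum>e\<in>E. 1/(\<rho>+1) * (?y e * ce e (?y e)) + \<rho>/(\<rho>+1) * (?x e * ce e (?x e)) + err)"
  proof (rule sum_mono)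
    fix e assume e: "e \<in> E"
    show "?y e * ce e (?x e) \<le> 1/(\<rho>+1) * (?y e * ce e (?y e)) + \<rho>/(\<rho>+1) * (?x e * ce e (?x e)) + err"
    proof (cases "e \<in> infinite_alpha_edges")
      case True
      then show ?thesis using avoid err \<rho> cost_nonneg[OF e] load_nonneg[OF f, of e] by simp
    next
      case False
      then show ?thesis
        unfolding \<rho>_def err_def using edge_smoothness[OF edges M \<eta> \<delta> \<theta> edges_split[OF e False]]
          load_nonneg[OF f, of e] load_nonneg[OF y, of e] load_le_inflow[OF f, of e] load_le_inflow[OF y, of e]
        by simp
    qed
  qed
  also have "\<dots> = 1/(\<rho>+1) * SC y + \<rho>/(\<rho>+1) * SC (f M) + card E * err"
    by (simp add: social_cost_def sum.distrib sum_distrib_left)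
  finally have "(\<rho>+1) * SC (f M) \<le> (\<rho>+1) * (1/(\<rho>+1) * SC y + \<rho>/(\<rho>+1) * SC (f M) + card E * err)"
    using \<rho> by (intro mult_left_mono) auto
  also have "\<dots> = ((\<rho>+1) * (1/(\<rho>+1))) * SC y + ((\<rho>+1) * (\<rho>/(\<rho>+1))) * SC (f M) + (\<rho>+1) * (card E * err)"
    by (simp only: distrib_left mult.assoc)
  also have "\<dots> = SC y + \<rho> * SC (f M) + (\<rho>+1) * (card E * err)"
    using \<rho> by simp
  finally show ?thesis by (simp add: \<rho>_def err_def algebra_simps)
qed

lemma eventually_light_infinite_alpha_edges:
  assumes \<theta>: "0 < \<theta>"
  shows "eventually (\<lambda>M. \<forall>g. feasible I P (demand M) g \<and> SC g \<le> K * M * c M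
           \<longrightarrow> (\<forall>e\<in>infinite_alpha_edges. load I P g e < \<theta> * M)) F"
proof -
  define b where "b = (\<bar>K\<bar> + 1) / (\<theta> * (rv_limit \<theta> / 2))"
  have R: "0 < rv_limit \<theta> / 2" using rv_limit_pos[OF \<theta>] by simp
  then have b: "0 \<le> b" "\<theta> * (b * (rv_limit \<theta> / 2)) = \<bar>K\<bar> + 1"
    using \<theta> by (auto simp: b_def)
  have "eventually (\<lambda>M. b * (rv_limit \<theta> / 2) * c M \<le> ce e (M * \<theta>)) F" if "e \<in> infinite_alpha_edges" for e
    using that b(1) \<theta> by (intro eventually_cost_ge) (auto simp: infinite_alpha_edges_def)
  then have "eventually (\<lambda>M. 0 < M \<and> (\<forall>e\<in>infinite_alpha_edges. b * (rv_limit \<theta> / 2) * c M \<le> ce e (M * \<theta>))) F"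
    using finite_edges
    by (intro eventually_conj eventually_pos eventually_ball_finite) (auto simp: infinite_alpha_edges_def)
  then show ?thesis
  proof (rule eventually_mono, safe)
    fix M g e
    assume M: "0 < M" and cost: "\<forall>e\<in>infinite_alpha_edges. b * (rv_limit \<theta> / 2) * c M \<le> ce e (M * \<theta>)"
      and g: "feasible I P (demand M) g" and bound: "SC g \<le> K * M * c M" and e: "e \<in> infinite_alpha_edges"
    have eE: "e \<in> E" using e by (simp add: infinite_alpha_edges_def)
    show "load I P g e < \<theta> * M"
    proof (rule ccontr)
      assume "\<not> load I P g e < \<theta> * M"
      then have "(\<theta> * M) * ce e (\<theta> * M) \<le> SC g"
        using social_cost_ge_heavy_edge[OF g eE] \<theta> M by simp
      moreover have "(\<bar>K\<bar> + 1) * (M * c M) = (\<theta> * (b * (rv_limit \<theta> / 2))) * (M * c M)"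
        using b(2) by simp
      then have "(\<bar>K\<bar> + 1) * (M * c M) = (\<theta> * M) * (b * (rv_limit \<theta> / 2) * c M)"
        by (simp add: algebra_simps)
      moreover have "b * (rv_limit \<theta> / 2) * c M \<le> ce e (\<theta> * M)"
        using cost e by (simp add: mult.commute)
      moreover have "K * (M * c M) < (\<bar>K\<bar> + 1) * (M * c M)"
        using M c_pos[OF M] by (intro mult_strict_right_mono) auto
      ultimately show False using bound \<theta> M by (smt (verit) mult.assoc mult_left_mono)
    qed
  qed
qed

lemma card_all_paths_pos: "0 < card all_paths"
  using finite_all_paths od_pairs_nonempty paths_nonempty by (auto simp: card_gt_0_iff)

lemma rerouted_flow_bound:
  assumes y0: "feasible I P (demand M) y0" and M: "0 < M" and \<theta>: "0 < \<theta>"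
    and light: "\<forall>e\<in>infinite_alpha_edges. load I P y0 e < \<theta> / card all_paths * M"
  obtains y where "feasible I P (demand M) y" "\<And>e. load I P y e \<le> load I P y0 e + \<theta> * M"
    "\<And>e. e \<in> infinite_alpha_edges \<Longrightarrow> load I P y e = 0"
proof -
  define bad where "bad p \<longleftrightarrow> (\<exists>e\<in>set p. e \<in> infinite_alpha_edges)" for p
  have good: "\<not> bad (good_path i)" if "i \<in> I" for i
    using good_path_finite_alpha[OF that] by (auto simp: bad_def finite_alpha_edges_def infinite_alpha_edges_def)
  have "(\<Sum>p\<in>{p\<in>all_paths. bad p}. y0 p) \<le> (\<Sum>p\<in>{p\<in>all_paths. bad p}. \<theta> / card all_paths * M)"
  proof (rule sum_mono)
    fix p assume "p \<in> {p\<in>all_paths. bad p}"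
    then obtain e where "p \<in> all_paths" "e \<in> set p" "e \<in> infinite_alpha_edges" by (auto simp: bad_def)
    then show "y0 p \<le> \<theta> / card all_paths * M"
      using flow_le_load[OF y0] light by (smt (verit))
  qed
  also have "\<dots> \<le> card all_paths * (\<theta> / card all_paths * M)"
  proof -
    have "card {p\<in>all_paths. bad p} \<le> card all_paths" by (rule card_mono[OF finite_all_paths]) auto
    then show ?thesis using \<theta> M by (simp only: sum_constant) (intro mult_right_mono, auto)
  qed
  also have "\<dots> = \<theta> * M" using card_all_paths_pos by simp
  finally have "load I P (reroute good_path bad y0) e \<le> load I P y0 e + \<theta> * M" for e
    using load_reroute_le[where q = good_path and bad = bad, OF good_path(1) good y0, of e] by simp
  moreover have "load I P (reroute good_path bad y0) e = 0" if "e \<in> infinite_alpha_edges" for e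
    using reroute_bad[where q = good_path and bad = bad, OF good_path(1) good] that by (auto simp: bad_def intro!: load_eq_0)
  ultimately show ?thesis using feasible_reroute[where q = good_path and bad = bad, OF good_path(1) good y0] that by blast
qed

lemma eventually_equilibrium_near_optimal:
  assumes \<epsilon>: "0 < \<epsilon>"
  shows "eventually (\<lambda>M. SC (f M) \<le> Opt M + \<epsilon> * M * c M) F"
proof -
  obtain \<eta> \<delta> \<theta> where \<eta>: "0 < \<eta>" and \<delta>: "0 < \<delta>" and \<theta>: "0 < \<theta>"
    and budget: "(rv_index + 1) * (card E * edge_error \<eta> \<delta> \<theta>) \<le> \<epsilon>/3"
    using exists_edge_parameters[of "\<epsilon>/3"] \<epsilon> by auto
  have "1 * (card E * edge_error \<eta> \<delta> \<theta>) \<le> (rv_index + 1) * (card E * edge_error \<eta> \<delta> \<theta>)"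
    using edge_error_nonneg[of \<eta> \<theta> \<delta>] \<eta> \<delta> \<theta> rv_index_nonneg by (intro mult_right_mono) auto
  with budget have budget': "card E * edge_error \<eta> \<delta> \<theta> \<le> \<epsilon>/3" by simp
  obtain K where K: "eventually (\<lambda>M. SC (f M) \<le> K * M * c M) F"
    by (rule eventually_equilibrium_cost_upper)
  have "0 < \<theta> / card all_paths" using \<theta> card_all_paths_pos by simp
  note light = eventually_light_infinite_alpha_edges[OF this, of "K + \<epsilon>"]
  have "eventually (\<lambda>M. 0 < M \<and> edgewise_power_law \<eta> \<delta> M) F"
    using \<eta> \<delta> by (intro eventually_conj eventually_pos eventually_edgewise_power_law)
  with K light show ?thesis
  proof eventually_elim
    case (elim M)
    then have M: "0 < M" and edges: "edgewise_power_law \<eta> \<delta> M" by auto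
    have MC: "0 < M * c M" using M c_pos[OF M] by simp
    have f: "feasible I P (demand M) (f M)" by (rule feasible_equilibrium[OF M])
    obtain y0 where y0: "feasible I P (demand M) y0" "SC y0 < Opt M + \<epsilon>/3 * M * c M"
      using exists_near_optimal[OF f, of "\<epsilon>/3 * M * c M"] \<epsilon> MC by (auto simp: mult.assoc)
    have "\<epsilon>/3 * M * c M \<le> \<epsilon> * M * c M" using \<epsilon> MC by (simp add: mult.assoc)
    then have "SC y0 \<le> (K + \<epsilon>) * M * c M"
      using y0(2) opt_le_social_cost[OF f] elim(1) by (simp only: distrib_right)
    then obtain y where y: "feasible I P (demand M) y" "\<And>e. load I P y e \<le> load I P y0 e + \<theta> * M"
      "\<And>e. e \<in> infinite_alpha_edges \<Longrightarrow> load I P y e = 0"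
      using rerouted_flow_bound[OF y0(1) M \<theta>] elim(2) y0(1) by metis
    have "SC (f M) \<le> SC y + \<epsilon>/3 * M * c M"
      using equilibrium_cost_le_avoiding_flow[OF edges M \<eta> less_imp_le[OF \<delta>] less_imp_le[OF \<theta>] y(1,3)]
        budget MC by (smt (verit) mult.assoc mult_right_mono)
    also have "\<dots> \<le> SC y0 + 2 * (\<epsilon>/3 * M * c M)"
      using social_cost_le_nearby_flow[OF edges M \<eta> less_imp_le[OF \<delta>] less_imp_le[OF \<theta>] y0(1) y]
        budget' MC by (smt (verit) mult.assoc mult_right_mono)
    finally show "SC (f M) \<le> Opt M + \<epsilon> * M * c M" using y0(2) by simp
  qed
qed

lemma tendsto_poa: "((\<lambda>M. poa E ce I P (demand M) (f M)) \<longlongrightarrow> 1) F"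
proof (rule tendstoI)
  fix \<epsilon> :: real assume \<epsilon>: "0 < \<epsilon>"
  obtain \<kappa> where \<kappa>: "0 < \<kappa>"
    and lower: "eventually (\<lambda>M. \<forall>g. feasible I P (demand M) g \<longrightarrow> \<kappa> * M * c M \<le> SC g) F"
    by (rule eventually_social_cost_lower)
  have "eventually (\<lambda>M. SC (f M) \<le> Opt M + \<epsilon> * \<kappa> / 2 * M * c M) F"
    using \<epsilon> \<kappa> by (intro eventually_equilibrium_near_optimal) simp
  with eventually_pos lower show "eventually (\<lambda>M. dist (poa E ce I P (demand M) (f M)) 1 < \<epsilon>) F"
  proof eventually_elim
    case (elim M)
    have f: "feasible I P (demand M) (f M)" by (rule feasible_equilibrium[OF elim(1)])
    have "\<kappa> * M * c M \<le> Opt M" using elim(2) by (intro le_opt[OF f]) auto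
    moreover have "0 < \<kappa> * M * c M" using \<kappa> elim(1) c_pos[OF elim(1)] by simp
    ultimately have Opt: "0 < Opt M" "\<epsilon> * \<kappa> / 2 * M * c M \<le> \<epsilon> / 2 * Opt M"
      using \<epsilon> by (auto simp: mult.assoc mult_left_mono)
    then have "SC (f M) \<le> (1 + \<epsilon>/2) * Opt M" using elim(3) by (simp add: algebra_simps)
    then have "SC (f M) / Opt M \<le> 1 + \<epsilon>/2" using Opt(1) by (simp add: divide_le_eq)
    moreover have "1 \<le> SC (f M) / Opt M" using opt_le_social_cost[OF f] Opt(1) by simp
    ultimately show "dist (poa E ce I P (demand M) (f M)) 1 < \<epsilon>"
      using Opt(1) \<epsilon> by (simp add: poa_def dist_real_def)
  qed
qed

end

section \<open>The price of anarchy at light and heavy traffic\<close>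

lemma filterlim_scale_at_top: "0 < u \<Longrightarrow> filterlim (\<lambda>M. M * u) at_top (at_top :: real filter)"
  by (intro filterlim_at_top_mult_tendsto_pos[OF tendsto_const] filterlim_ident)

lemma filterlim_scale_at_right_0:
  assumes "0 < (u :: real)"
  shows "filterlim (\<lambda>M. M * u) (at_right 0) (at_right 0)"
proof -
  have "((\<lambda>M. M * u) \<longlongrightarrow> 0) (at_right 0)"
    by (intro tendsto_mult_left_zero tendsto_ident_at)
  moreover have "eventually (\<lambda>M. M * u \<in> {0<..} \<and> M * u \<noteq> 0) (at_right 0)"
    using assms by (auto simp: eventually_at_right_field intro!: exI[of _ 1])
  ultimately show ?thesis by (simp add: filterlim_at)
qed

lemma regular_variation_at_0_or_top:
  assumes "F = at_right 0 \<or> F = at_top" and "regularly_varying F c"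
  shows "regular_variation c F"
proof
  have "at_right (0::real) \<noteq> bot" "(at_top :: real filter) \<noteq> bot" by simp_all
  then show "F \<noteq> bot" using assms(1) by metis
qed (use assms filterlim_scale_at_top filterlim_scale_at_right_0 in
      \<open>auto simp: eventually_at_right_less eventually_gt_at_top\<close>)

theorem theorem5p2:
  fixes V :: "'v set" and E :: "'e set" and src tgt :: "'e \<Rightarrow> 'v"
    and I :: "'i set" and orig dest :: "'i \<Rightarrow> 'v" and P :: "'i \<Rightarrow> 'e list set"
    and ce :: "'e \<Rightarrow> real \<Rightarrow> real" and lam :: "'i \<Rightarrow> real"
    and c :: "real \<Rightarrow> real" and \<alpha> :: "'e \<Rightarrow> ereal" and F :: "real filter"
    and f :: "real \<Rightarrow> 'e list \<Rightarrow> real"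
  assumes graph: "finite V" "finite E" "src ` E \<subseteq> V" "tgt ` E \<subseteq> V"
    and od: "finite I" "\<forall>i\<in>I. orig i \<in> V \<and> dest i \<in> V"
    and paths: "\<forall>i\<in>I. finite (P i) \<and> P i \<noteq> {} \<and> (\<forall>p\<in>P i. is_path E src tgt (orig i) (dest i) p)"
    and disj: "disjoint_family_on P I"
    and costs: "\<forall>e\<in>E. continuous_on {0..} (ce e) \<and> mono_on {0..} (ce e) \<and> (\<forall>x\<ge>0. 0 \<le> ce e x)"
    and lam: "\<forall>i\<in>I. 0 < lam i" "(\<Sum>i\<in>I. lam i) = 1"
    and omega: "F = at_right 0 \<or> F = at_top"
    and regvar: "regularly_varying F c"
    and bench: "\<forall>e\<in>E. ((\<lambda>x. ereal (ce e x / c x)) \<longlongrightarrow> \<alpha> e) F"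
    and tight: "0 < tight_alpha I P \<alpha>" "tight_alpha I P \<alpha> < \<infinity>"
    and eq: "\<forall>M>0. wardrop_eq ce I P (\<lambda>i. lam i * M) (f M)"
  shows "((\<lambda>M. poa E ce I P (\<lambda>i. lam i * M) (f M)) \<longlongrightarrow> 1) F"
proof -
  \<comment> \<open>Continuity of the costs is only needed for the existence of equilibria, which is assumed.\<close>
  interpret regular_variation c F using omega regvar by (rule regular_variation_at_0_or_top)
  interpret scaled_game E I P ce c F lam \<alpha> f
    using graph(2) od(1) paths disj costs lam bench tight eq
    by unfold_locales (auto simp: is_path_def)
  show ?thesis by (rule tendsto_poa)
qed

end
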